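(* Let $F_0,F_1$ be pure contexts, $t$ a term, and $k,x,y$ variables with $x\notin\mathrm{fv}(F_0)\cup\mathrm{fv}(F_1)$ and $y\notin\mathrm{fv}(F_1)$. Then $\langle t\{\lambda x.\langle F_1[F_0[x]]\rangle/k\}\rangle \approx \langle t\{\lambda x.\langle (\lambda y.F_1[y])\,F_0[x]\rangle/k\}\rangle$.
   Context: The calculus $\lambda_{\mathcal S}$. Terms: $t ::= x \mid \lambda x.t \mid t\,t \mid \mathcal{S}k.t \mid \langle t\rangle$ (shift and reset); values: $v ::= \lambda x.t \mid x$. $\lambda x.t$ binds $x$, $\mathcal{S}k.t$ binds $k$; terms up to $\alpha$-conversion; $\mathrm{fv}$ free variables; capture-avoiding substitution $t\{v/x\}$. Pure contexts $F ::= [\,] \mid v\,F \mid F\,t$; evaluation contexts $E ::= [\,] \mid v\,E \mid E\,t \mid \langle E\rangle$. Reduction: $E[(\lambda x.t)\,v] \to E[t\{v/x\}]$; $E[\langle F[\mathcal{S}k.t]\rangle] \to E[\langle t\{\lambda x.\langle F[x]\rangle/k\}\rangle]$ ($x\notin\mathrm{fv}(F)$); $E[\langle v\rangle]\to E[v]$. $t\Downarrow t'$ iff $t\to^*t'$ and $t'$ irreducible. Normal forms: values, control stuck terms $F[\mathcal{S}k.t]$, open stuck terms $E[x\,v]$. Fresh: not free in the terms/contexts considered. Refined normal form bisimilarity $\approx$: for a relation $\mathcal R$ on terms, $E_0\mathrel{\mathcal R}E_1$ iff either $E_0=E_0'[\langle F_0\rangle]$, $E_1=E_1'[\langle F_1\rangle]$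 ($F_i$ pure) with $E_0'[x]\mathrel{\mathcal R}E_1'[x]$ and $\langle F_0[x]\rangle\mathrel{\mathcal R}\langle F_1[x]\rangle$ ($x$ fresh), or $E_0=F_0$, $E_1=F_1$ pure with $F_0[x]\mathrel{\mathcal R}F_1[x]$ ($x$ fresh). $v\mathbin{@}y$ is $x\,y$ if $v=x$, $t\{y/x\}$ if $v=\lambda x.t$. $\mathcal R^{\mathrm{rnf}}$ on normal forms: $v_0\mathrel{\mathcal R^{\mathrm{rnf}}}v_1$ if $v_0\mathbin{@}x\mathrel{\mathcal R}v_1\mathbin{@}x$ ($x$ fresh); $E_0[x\,v_0]\mathrel{\mathcal R^{\mathrm{rnf}}}E_1[x\,v_1]$ if $E_0\mathrel{\mathcal R}E_1$ and $v_0\mathrel{\mathcal R^{\mathrm{rnf}}}v_1$; $F_0[\mathcal{S}k.t_0]\mathrel{\mathcal R^{\mathrm{rnf}}}F_1[\mathcal{S}k.t_1]$ if $\langle t_0\{\lambda x.\langle k'\,F_0[x]\rangle/k\}\rangle\mathrel{\mathcal R}\langle t_1\{\lambda x.\langle k'\,F_1[x]\rangle/k\}\rangle$ for fresh $k',x$. $\mathcal R$ is a refined simulation if $t_0\mathrel{\mathcal R}t_1$ and $t_0\Downarrow t_0'$ imply $t_1\Downarrow t_1'$ with $t_0'\mathrel{\mathcal R^{\mathrm{rnf}}}t_1'$; a refined bisimulation if $\mathcal R$ and $\mathcal R^{-1}$ are refined simulations; $\approx$ is the largest refined normal form bisimulation. *)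

theory Defs
  imports Main
begin

type_synonym var = nat

datatype trm = Var var | Lam var trm | App trm trm | Shift var trm | Reset trm

primrec fv :: "trm \<Rightarrow> var set" where
  "fv (Var x) = {x}"
| "fv (Lam x t) = fv t - {x}"
| "fv (App s t) = fv s \<union> fv t"
| "fv (Shift k t) = fv t - {k}"
| "fv (Reset t) = fv t"

definition swap_var :: "var \<Rightarrow> var \<Rightarrow> var \<Rightarrow> var" where
  "swap_var a b z = (if z = a then b else if z = b then a else z)"

primrec swp :: "var \<Rightarrow> var \<Rightarrow> trm \<Rightarrow> trm" where
  "swp a b (Var x) = Var (swap_var a b x)"
| "swp a b (Lam x t) = Lam (swap_var a b x) (swp a b t)"
| "swp a b (App s t) = App (swp a b s) (swp a b t)"
| "swp a b (Shift k t) = Shift (swap_var a b k) (swp a b t)"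
| "swp a b (Reset t) = Reset (swp a b t)"

lemma size_swp [simp]: "size (swp a b t) = size t"
  by (induction t) auto

definition fresh :: "var set \<Rightarrow> var" where
  "fresh S = Suc (Max (insert 0 S))"

function subst :: "trm \<Rightarrow> trm \<Rightarrow> var \<Rightarrow> trm" where
  "subst (Var y) u x = (if y = x then u else Var y)"
| "subst (App a b) u x = App (subst a u x) (subst b u x)"
| "subst (Reset a) u x = Reset (subst a u x)"
| "subst (Lam y a) u x = (if y = x then Lam y a else
     (let z = fresh (fv u \<union> fv a \<union> {x, y}) in Lam z (subst (swp y z a) u x)))"
| "subst (Shift y a) u x = (if y = x then Shift y a else
     (let z = fresh (fv u \<union> fv a \<union> {x, y}) in Shift z (subst (swp y z a) u x)))"
  by pat_completeness auto
termination
  by (relation "measure (\<lambda>(a, u, x). size a)") auto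

primrec is_value :: "trm \<Rightarrow> bool" where
  "is_value (Var x) = True"
| "is_value (Lam x t) = True"
| "is_value (App s t) = False"
| "is_value (Shift k t) = False"
| "is_value (Reset t) = False"

datatype ctx = Hole | CArg trm ctx | CFun ctx trm | CReset ctx

primrec plug :: "ctx \<Rightarrow> trm \<Rightarrow> trm" where
  "plug Hole s = s"
| "plug (CArg v E) s = App v (plug E s)"
| "plug (CFun E t) s = App (plug E s) t"
| "plug (CReset E) s = Reset (plug E s)"

primrec fv_ctx :: "ctx \<Rightarrow> var set" where
  "fv_ctx Hole = {}"
| "fv_ctx (CArg v E) = fv v \<union> fv_ctx E"
| "fv_ctx (CFun E t) = fv_ctx E \<union> fv t"
| "fv_ctx (CReset E) = fv_ctx E"

primrec is_pure :: "ctx \<Rightarrow> bool" where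
  "is_pure Hole = True"
| "is_pure (CArg v E) = (is_value v \<and> is_pure E)"
| "is_pure (CFun E t) = is_pure E"
| "is_pure (CReset E) = False"

primrec is_ectx :: "ctx \<Rightarrow> bool" where
  "is_ectx Hole = True"
| "is_ectx (CArg v E) = (is_value v \<and> is_ectx E)"
| "is_ectx (CFun E t) = is_ectx E"
| "is_ectx (CReset E) = is_ectx E"

primrec ctx_comp :: "ctx \<Rightarrow> ctx \<Rightarrow> ctx" where
  "ctx_comp Hole E' = E'"
| "ctx_comp (CArg v E) E' = CArg v (ctx_comp E E')"
| "ctx_comp (CFun E t) E' = CFun (ctx_comp E E') t"
| "ctx_comp (CReset E) E' = CReset (ctx_comp E E')"

inductive step :: "trm \<Rightarrow> trm \<Rightarrow> bool" where
  beta: "is_ectx E \<Longrightarrow> is_value v \<Longrightarrow>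
     step (plug E (App (Lam x t) v)) (plug E (subst t v x))"
| shift: "is_ectx E \<Longrightarrow> is_pure F \<Longrightarrow> x \<notin> fv_ctx F \<Longrightarrow>
     step (plug E (Reset (plug F (Shift k t))))
          (plug E (Reset (subst t (Lam x (Reset (plug F (Var x)))) k)))"
| reset: "is_ectx E \<Longrightarrow> is_value v \<Longrightarrow> step (plug E (Reset v)) (plug E v)"

definition irreducible :: "trm \<Rightarrow> bool" where
  "irreducible t \<longleftrightarrow> \<not> (\<exists>t'. step t t')"

definition evals :: "trm \<Rightarrow> trm \<Rightarrow> bool" where
  "evals t t' \<longleftrightarrow> step\<^sup>*\<^sup>* t t' \<and> irreducible t'"

definition ctx_rel :: "(trm \<Rightarrow> trm \<Rightarrow> bool) \<Rightarrow> ctx \<Rightarrow> ctx \<Rightarrow> bool" where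
  "ctx_rel R E0 E1 \<longleftrightarrow>
     (\<exists>E0' F0 E1' F1. E0 = ctx_comp E0' (CReset F0) \<and> E1 = ctx_comp E1' (CReset F1) \<and>
        is_ectx E0' \<and> is_ectx E1' \<and> is_pure F0 \<and> is_pure F1 \<and>
        (\<forall>x. x \<notin> fv_ctx E0 \<union> fv_ctx E1 \<longrightarrow>
           R (plug E0' (Var x)) (plug E1' (Var x)) \<and>
           R (Reset (plug F0 (Var x))) (Reset (plug F1 (Var x)))))
   \<or> (is_pure E0 \<and> is_pure E1 \<and>
        (\<forall>x. x \<notin> fv_ctx E0 \<union> fv_ctx E1 \<longrightarrow> R (plug E0 (Var x)) (plug E1 (Var x))))"

fun vapp :: "trm \<Rightarrow> var \<Rightarrow> trm" where
  "vapp (Var x) y = App (Var x) (Var y)"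
| "vapp (Lam x t) y = subst t (Var y) x"
| "vapp t y = undefined"

definition val_rel :: "(trm \<Rightarrow> trm \<Rightarrow> bool) \<Rightarrow> trm \<Rightarrow> trm \<Rightarrow> bool" where
  "val_rel R v0 v1 \<longleftrightarrow> is_value v0 \<and> is_value v1 \<and>
     (\<forall>x. x \<notin> fv v0 \<union> fv v1 \<longrightarrow> R (vapp v0 x) (vapp v1 x))"

definition rnf :: "(trm \<Rightarrow> trm \<Rightarrow> bool) \<Rightarrow> trm \<Rightarrow> trm \<Rightarrow> bool" where
  "rnf R t0 t1 \<longleftrightarrow>
     val_rel R t0 t1
   \<or> (\<exists>E0 E1 z v0 v1. is_ectx E0 \<and> is_ectx E1 \<and>
        t0 = plug E0 (App (Var z) v0) \<and> t1 = plug E1 (App (Var z) v1) \<and>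
        ctx_rel R E0 E1 \<and> val_rel R v0 v1)
   \<or> (\<exists>F0 F1 k0 k1 s0 s1. is_pure F0 \<and> is_pure F1 \<and>
        t0 = plug F0 (Shift k0 s0) \<and> t1 = plug F1 (Shift k1 s1) \<and>
        (\<forall>k' x. k' \<noteq> x \<longrightarrow> k' \<notin> fv t0 \<union> fv t1 \<longrightarrow> x \<notin> fv t0 \<union> fv t1 \<longrightarrow>
           R (Reset (subst s0 (Lam x (Reset (App (Var k') (plug F0 (Var x))))) k0))
             (Reset (subst s1 (Lam x (Reset (App (Var k') (plug F1 (Var x))))) k1))))"

definition refined_sim :: "(trm \<Rightarrow> trm \<Rightarrow> bool) \<Rightarrow> bool" where
  "refined_sim R \<longleftrightarrow> (\<forall>t0 t1 t0'. R t0 t1 \<longrightarrow> evals t0 t0' \<longrightarrow>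
      (\<exists>t1'. evals t1 t1' \<and> rnf R t0' t1'))"

definition refined_bisim :: "(trm \<Rightarrow> trm \<Rightarrow> bool) \<Rightarrow> bool" where
  "refined_bisim R \<longleftrightarrow> refined_sim R \<and> refined_sim (conversep R)"

definition rnf_bisimilar :: "trm \<Rightarrow> trm \<Rightarrow> bool" where
  "rnf_bisimilar t0 t1 \<longleftrightarrow> (\<exists>R. refined_bisim R \<and> R t0 t1)"

end

theory Submission
  imports Defs
begin

text \<open>
  Both sides of the equation reduce in lockstep, except that the right-hand side needs one extra
  administrative \<open>\<beta>\<close>-step \<open>\<langle>(\<lambda>y.F\<^sub>1[y]) v\<rangle> \<rightarrow> \<langle>F\<^sub>1[v]\<rangle>\<close> once \<open>F\<^sub>0[x]\<close> has become a value. We therefore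
  consider the congruence \<open>sim\<close> generated by \<open>\<langle>G[u]\<rangle> \<sim> \<langle>(\<lambda>y.G[y]) u\<rangle>\<close> for pure \<open>G\<close>, and show that it
  is preserved by reduction on the left, that a step on the right is either matched on the left
  or is administrative and shrinks the term, and that related normal forms are related by the
  refined normal form clauses. Since \<open>sim\<close> is closed under substitution of related values, the
  two terms of the theorem are related, and \<open>sim\<close> (read on named terms) is a refined bisimulation.

  To reason about \<open>sim\<close> up to \<open>\<alpha>\<close>-equivalence, terms are translated into a locally nameless
  representation, on which reduction is simulated exactly.
\<close>

section \<open>Locally nameless terms\<close>

datatype lterm = BVar nat | FVar var | LLam lterm | LApp lterm lterm | LShift lterm | LReset lterm

primrec lopen :: "nat \<Rightarrow> lterm \<Rightarrow> lterm \<Rightarrow> lterm" where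
  "lopen k u (BVar i) = (if i = k then u else BVar i)"
| "lopen k u (FVar x) = FVar x"
| "lopen k u (LLam b) = LLam (lopen (Suc k) u b)"
| "lopen k u (LApp a b) = LApp (lopen k u a) (lopen k u b)"
| "lopen k u (LShift b) = LShift (lopen (Suc k) u b)"
| "lopen k u (LReset a) = LReset (lopen k u a)"

primrec lclose :: "nat \<Rightarrow> var \<Rightarrow> lterm \<Rightarrow> lterm" where
  "lclose k x (BVar i) = BVar i"
| "lclose k x (FVar y) = (if y = x then BVar k else FVar y)"
| "lclose k x (LLam b) = LLam (lclose (Suc k) x b)"
| "lclose k x (LApp a b) = LApp (lclose k x a) (lclose k x b)"
| "lclose k x (LShift b) = LShift (lclose (Suc k) x b)"
| "lclose k x (LReset a) = LReset (lclose k x a)"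

primrec lc_at :: "nat \<Rightarrow> lterm \<Rightarrow> bool" where
  "lc_at k (BVar i) = (i < k)"
| "lc_at k (FVar y) = True"
| "lc_at k (LLam b) = lc_at (Suc k) b"
| "lc_at k (LApp a b) = (lc_at k a \<and> lc_at k b)"
| "lc_at k (LShift b) = lc_at (Suc k) b"
| "lc_at k (LReset a) = lc_at k a"

abbreviation lc :: "lterm \<Rightarrow> bool" where
  "lc \<equiv> lc_at 0"

primrec lfv :: "lterm \<Rightarrow> var set" where
  "lfv (BVar i) = {}"
| "lfv (FVar y) = {y}"
| "lfv (LLam b) = lfv b"
| "lfv (LApp a b) = lfv a \<union> lfv b"
| "lfv (LShift b) = lfv b"
| "lfv (LReset a) = lfv a"

primrec lsubst :: "(var \<Rightarrow> lterm) \<Rightarrow> lterm \<Rightarrow> lterm" where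
  "lsubst s (BVar i) = BVar i"
| "lsubst s (FVar y) = s y"
| "lsubst s (LLam b) = LLam (lsubst s b)"
| "lsubst s (LApp a b) = LApp (lsubst s a) (lsubst s b)"
| "lsubst s (LShift b) = LShift (lsubst s b)"
| "lsubst s (LReset a) = LReset (lsubst s a)"

primrec lswap :: "var \<Rightarrow> var \<Rightarrow> lterm \<Rightarrow> lterm" where
  "lswap a b (BVar i) = BVar i"
| "lswap a b (FVar y) = FVar (swap_var a b y)"
| "lswap a b (LLam t) = LLam (lswap a b t)"
| "lswap a b (LApp s t) = LApp (lswap a b s) (lswap a b t)"
| "lswap a b (LShift t) = LShift (lswap a b t)"
| "lswap a b (LReset t) = LReset (lswap a b t)"

primrec lvalue :: "lterm \<Rightarrow> bool" where
  "lvalue (BVar i) = False"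
| "lvalue (FVar x) = True"
| "lvalue (LLam t) = True"
| "lvalue (LApp s t) = False"
| "lvalue (LShift t) = False"
| "lvalue (LReset t) = False"

primrec to_ln :: "trm \<Rightarrow> lterm" where
  "to_ln (Var x) = FVar x"
| "to_ln (Lam x t) = LLam (lclose 0 x (to_ln t))"
| "to_ln (App s t) = LApp (to_ln s) (to_ln t)"
| "to_ln (Shift k t) = LShift (lclose 0 k (to_ln t))"
| "to_ln (Reset t) = LReset (to_ln t)"

definition lc_subst :: "(var \<Rightarrow> lterm) \<Rightarrow> bool" where
  "lc_subst s \<longleftrightarrow> (\<forall>x. lc (s x))"

lemma lc_at_mono: "lc_at k d \<Longrightarrow> k \<le> m \<Longrightarrow> lc_at m d"
  by (induction d arbitrary: k m) fastforce+

lemma lopen_lc_at: "lc_at k d \<Longrightarrow> lopen k u d = d"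
  by (induction d arbitrary: k) auto

lemma lopen_lc: "lc d \<Longrightarrow> lopen k u d = d"
  using lopen_lc_at lc_at_mono by blast

lemma lc_at_lopen: "lc_at (Suc k) b \<Longrightarrow> lc u \<Longrightarrow> lc_at k (lopen k u b)"
  by (induction b arbitrary: k) (auto intro: lc_at_mono)

lemma lc_at_Suc_if_lopen: "lc_at k (lopen k u b) \<Longrightarrow> lc_at (Suc k) b"
  by (induction b arbitrary: k) (auto split: if_splits)

lemma size_lopen_FVar [simp]: "size (lopen k (FVar z) b) = size b"
  by (induction b arbitrary: k) auto

lemma finite_lfv [simp]: "finite (lfv d)"
  by (induction d) auto

lemma lsubst_lopen: "lc_subst s \<Longrightarrow> lsubst s (lopen k u b) = lopen k (lsubst s u) (lsubst s b)"
  by (induction b arbitrary: k) (auto simp: lc_subst_def lopen_lc)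

lemma lsubst_upd_notin: "w \<notin> lfv b \<Longrightarrow> lsubst (s(w := t)) b = lsubst s b"
  by (induction b) auto

lemma lsubst_FVar [simp]: "lsubst FVar d = d"
  by (induction d) auto

lemma lsubst_single_notin: "x \<notin> lfv d \<Longrightarrow> lsubst (FVar(x := u)) d = d"
  using lsubst_upd_notin[of x d FVar u] by simp

lemma lopen_lclose: "lc_at k d \<Longrightarrow> lc u \<Longrightarrow> lopen k u (lclose k x d) = lsubst (FVar(x := u)) d"
  by (induction d arbitrary: k) (auto simp: lopen_lc)

lemma lc_at_lclose: "lc_at k d \<Longrightarrow> lc_at (Suc k) (lclose k x d)"
  by (induction d arbitrary: k) auto

lemma lfv_lclose [simp]: "lfv (lclose k x d) = lfv d - {x}"
  by (induction d arbitrary: k) auto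

lemma lclose_notin: "x \<notin> lfv d \<Longrightarrow> lclose k x d = d"
  by (induction d arbitrary: k) auto

lemma lclose_lswap: "z \<notin> lfv a \<Longrightarrow> lclose k z (lswap y z a) = lclose k y a"
  by (induction a arbitrary: k) (auto simp: swap_var_def)

lemma lswap_lclose: "lswap a b (lclose k x d) = lclose k (swap_var a b x) (lswap a b d)"
  by (induction d arbitrary: k) (auto simp: swap_var_def)

lemma lclose_lsubst:
  assumes "s z = FVar z" and "\<And>y. y \<noteq> z \<Longrightarrow> z \<notin> lfv (s y) \<and> lc (s y)"
  shows "lclose k z (lsubst s d) = lsubst s (lclose k z d)"
  using assms by (induction d arbitrary: k) (auto simp: lclose_notin lopen_lc)

lemma lsubst_lclose_rename:
  assumes "z \<notin> lfv u \<union> lfv a \<union> {x, y}" and "lc u"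
  shows "lclose k z (lsubst (FVar(x := u)) (lswap y z a)) = lsubst (FVar(x := u)) (lclose k y a)"
proof -
  have "lclose k z (lsubst (FVar(x := u)) (lswap y z a)) = lsubst (FVar(x := u)) (lclose k z (lswap y z a))"
    using assms by (intro lclose_lsubst) auto
  then show ?thesis
    using assms by (simp add: lclose_lswap)
qed

lemma to_ln_swp: "to_ln (swp a b t) = lswap a b (to_ln t)"
  by (induction t) (auto simp: lswap_lclose)

lemma lfv_to_ln [simp]: "lfv (to_ln t) = fv t"
  by (induction t) auto

lemma lc_to_ln [simp]: "lc (to_ln t)"
  by (induction t) (auto intro: lc_at_lclose)

lemma fresh_notin: "finite S \<Longrightarrow> fresh S \<notin> S"
proof
  assume "finite S" "fresh S \<in> S"
  then have "fresh S \<le> Max (insert 0 S)" by simp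
  then show False by (simp add: fresh_def)
qed

lemma ex_fresh: "finite S \<Longrightarrow> \<exists>w::var. w \<notin> S"
  using fresh_notin by blast

lemma finite_fv [simp]: "finite (fv t)"
  by (induction t) auto

lemma to_ln_subst: "to_ln (subst t u x) = lsubst (FVar(x := to_ln u)) (to_ln t)"
proof (induction t u x rule: subst.induct)
  case (4 y a u x)
  show ?case
  proof (cases "y = x")
    case True
    then show ?thesis
      using lsubst_single_notin[of x "lclose 0 x (to_ln a)" "to_ln u"] by (simp add: fun_upd_def)
  next
    case False
    define z where "z = fresh (fv u \<union> fv a \<union> {x, y})"
    have z: "z \<notin> fv u \<union> fv a \<union> {x, y}"
      unfolding z_def by (rule fresh_notin) simp
    have "subst (Lam y a) u x = Lam z (subst (swp y z a) u x)"
      using False by (simp add: Let_def z_def)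
    then show ?thesis
      using 4[OF False z_def] lsubst_lclose_rename[of z "to_ln u" "to_ln a" x y 0] z
      by (simp add: to_ln_swp del: fun_upd_apply)
  qed
next
  case (5 y a u x)
  show ?case
  proof (cases "y = x")
    case True
    then show ?thesis
      using lsubst_single_notin[of x "lclose 0 x (to_ln a)" "to_ln u"] by (simp add: fun_upd_def)
  next
    case False
    define z where "z = fresh (fv u \<union> fv a \<union> {x, y})"
    have z: "z \<notin> fv u \<union> fv a \<union> {x, y}"
      unfolding z_def by (rule fresh_notin) simp
    have "subst (Shift y a) u x = Shift z (subst (swp y z a) u x)"
      using False by (simp add: Let_def z_def)
    then show ?thesis
      using 5[OF False z_def] lsubst_lclose_rename[of z "to_ln u" "to_ln a" x y 0] z
      by (simp add: to_ln_swp del: fun_upd_apply)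
  qed
qed auto

lemma to_ln_subst_lopen: "to_ln (subst t u x) = lopen 0 (to_ln u) (lclose 0 x (to_ln t))"
  by (simp add: to_ln_subst lopen_lclose)

datatype lctx = LHole | LCArg lterm lctx | LCFun lctx lterm | LCReset lctx

primrec lplug :: "lctx \<Rightarrow> lterm \<Rightarrow> lterm" where
  "lplug LHole s = s"
| "lplug (LCArg v E) s = LApp v (lplug E s)"
| "lplug (LCFun E t) s = LApp (lplug E s) t"
| "lplug (LCReset E) s = LReset (lplug E s)"

primrec lcomp :: "lctx \<Rightarrow> lctx \<Rightarrow> lctx" where
  "lcomp LHole E' = E'"
| "lcomp (LCArg v E) E' = LCArg v (lcomp E E')"
| "lcomp (LCFun E t) E' = LCFun (lcomp E E') t"
| "lcomp (LCReset E) E' = LCReset (lcomp E E')"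

primrec lpure :: "lctx \<Rightarrow> bool" where
  "lpure LHole = True"
| "lpure (LCArg v E) = (lvalue v \<and> lpure E)"
| "lpure (LCFun E t) = lpure E"
| "lpure (LCReset E) = False"

primrec lectx :: "lctx \<Rightarrow> bool" where
  "lectx LHole = True"
| "lectx (LCArg v E) = (lvalue v \<and> lectx E)"
| "lectx (LCFun E t) = lectx E"
| "lectx (LCReset E) = lectx E"

primrec lc_ctx :: "lctx \<Rightarrow> bool" where
  "lc_ctx LHole = True"
| "lc_ctx (LCArg v E) = (lc v \<and> lc_ctx E)"
| "lc_ctx (LCFun E t) = (lc_ctx E \<and> lc t)"
| "lc_ctx (LCReset E) = lc_ctx E"

primrec to_lctx :: "ctx \<Rightarrow> lctx" where
  "to_lctx Hole = LHole"
| "to_lctx (CArg v E) = LCArg (to_ln v) (to_lctx E)"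
| "to_lctx (CFun E t) = LCFun (to_lctx E) (to_ln t)"
| "to_lctx (CReset E) = LCReset (to_lctx E)"

lemma to_ln_plug [simp]: "to_ln (plug E t) = lplug (to_lctx E) (to_ln t)"
  by (induction E) auto

lemma lvalue_to_ln [simp]: "lvalue (to_ln t) = is_value t"
  by (cases t) auto

lemma lpure_to_lctx [simp]: "lpure (to_lctx E) = is_pure E"
  by (induction E) auto

lemma lectx_to_lctx [simp]: "lectx (to_lctx E) = is_ectx E"
  by (induction E) auto

lemma lc_ctx_to_lctx [simp]: "lc_ctx (to_lctx E)"
  by (induction E) auto

lemma lc_at_lplug [simp]: "lc_ctx G \<Longrightarrow> lc_at k (lplug G s) = lc_at k s"
  by (induction G) (auto intro: lc_at_mono)

lemma lopen_lplug: "lc_ctx G \<Longrightarrow> lopen k u (lplug G s) = lplug G (lopen k u s)"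
  by (induction G) (auto simp: lopen_lc)

lemma lclose_lplug_to_lctx: "x \<notin> fv_ctx F \<Longrightarrow> lclose k x (lplug (to_lctx F) s) = lplug (to_lctx F) (lclose k x s)"
  by (induction F) (auto simp: lclose_notin)

lemma lplug_lcomp [simp]: "lplug (lcomp A B) s = lplug A (lplug B s)"
  by (induction A) auto

lemma lcomp_assoc [simp]: "lcomp (lcomp A B) C = lcomp A (lcomp B C)"
  by (induction A) auto

lemma lcomp_LHole [simp]: "lcomp A LHole = A"
  by (induction A) auto

lemma plug_ctx_comp [simp]: "plug (ctx_comp A B) s = plug A (plug B s)"
  by (induction A) auto

lemma is_ectx_ctx_comp: "is_ectx A \<Longrightarrow> is_ectx B \<Longrightarrow> is_ectx (ctx_comp A B)"
  by (induction A) auto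

lemma lectx_lcomp: "lectx A \<Longrightarrow> lectx B \<Longrightarrow> lectx (lcomp A B)"
  by (induction A) auto

lemma lectx_lcompD: "lectx (lcomp A B) \<Longrightarrow> lectx B"
  by (induction A) auto

lemma lpure_lcomp: "lpure A \<Longrightarrow> lpure B \<Longrightarrow> lpure (lcomp A B)"
  by (induction A) auto

lemma lpure_lcompD: "lpure (lcomp A B) \<Longrightarrow> lpure B"
  by (induction A) auto

lemma lc_ctx_lcomp: "lc_ctx A \<Longrightarrow> lc_ctx B \<Longrightarrow> lc_ctx (lcomp A B)"
  by (induction A) auto

lemma lpure_imp_lectx: "lpure A \<Longrightarrow> lectx A"
  by (induction A) auto

lemma lvalue_lplugD: "lvalue (lplug G u) \<Longrightarrow> G = LHole"
  by (cases G) auto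

lemma size_lplug: "size (lplug G s) = size (lplug G (BVar 0)) + size s"
  by (induction G) auto

lemma finite_fv_ctx [simp]: "finite (fv_ctx E)"
  by (induction E) auto

inductive lstep :: "lterm \<Rightarrow> lterm \<Rightarrow> bool" where
  lbeta: "lvalue v \<Longrightarrow> lstep (LApp (LLam b) v) (lopen 0 v b)"
| lreset: "lvalue v \<Longrightarrow> lstep (LReset v) v"
| lshift: "lpure F \<Longrightarrow> lstep (LReset (lplug F (LShift b)))
            (LReset (lopen 0 (LLam (LReset (lplug F (BVar 0)))) b))"
| lappL: "lstep a a' \<Longrightarrow> lstep (LApp a c) (LApp a' c)"
| lappR: "lvalue v \<Longrightarrow> lstep c c' \<Longrightarrow> lstep (LApp v c) (LApp v c')"
| lres: "lstep a a' \<Longrightarrow> lstep (LReset a) (LReset a')"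

definition lirreducible :: "lterm \<Rightarrow> bool" where
  "lirreducible d \<longleftrightarrow> \<not> (\<exists>d'. lstep d d')"

lemma lstep_lplug: "lectx E \<Longrightarrow> lstep a a' \<Longrightarrow> lstep (lplug E a) (lplug E a')"
  by (induction E) (auto intro: lstep.intros)

lemma lsteps_lplug: "lstep\<^sup>+\<^sup>+ a a' \<Longrightarrow> lectx E \<Longrightarrow> lstep\<^sup>+\<^sup>+ (lplug E a) (lplug E a')"
  by (induction rule: tranclp_induct) (auto intro: lstep_lplug tranclp.trancl_into_trancl)

lemma lvalue_no_lstep: "lvalue v \<Longrightarrow> \<not> lstep v d"
  by (auto elim: lstep.cases)

lemma lstep_LApp_cases:
  assumes "lstep (LApp a c) d"
  obtains (beta) b where "a = LLam b" "lvalue c" "d = lopen 0 c b"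
    | (left) a' where "lstep a a'" "d = LApp a' c"
    | (right) c' where "lvalue a" "lstep c c'" "d = LApp a c'"
  using assms by (cases rule: lstep.cases) auto

lemma lstep_LReset_cases:
  assumes "lstep (LReset a) d"
  obtains (val) "lvalue a" "d = a"
    | (shift) F b where "lpure F" "a = lplug F (LShift b)"
        "d = LReset (lopen 0 (LLam (LReset (lplug F (BVar 0)))) b)"
    | (inner) a' where "lstep a a'" "d = LReset a'"
  using assms by (cases rule: lstep.cases) auto

lemma lstep_lpure_plugD:
  "lpure G \<Longrightarrow> \<not> lvalue u \<Longrightarrow> lstep (lplug G u) a \<Longrightarrow> \<exists>u'. lstep u u' \<and> a = lplug G u'"
proof (induction G arbitrary: a)
  case (LCArg v G)
  then have "lstep (LApp v (lplug G u)) a" by simp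
  then show ?case
    by (cases rule: lstep_LApp_cases) (use LCArg lvalue_lplugD[of G u] lvalue_no_lstep[of v] in auto)
next
  case (LCFun G t)
  then have "lstep (LApp (lplug G u) t) a" by simp
  then show ?case
    by (cases rule: lstep_LApp_cases) (use LCFun lvalue_lplugD[of G u] in auto)
qed auto

lemma step_plug: "step s s' \<Longrightarrow> is_ectx E0 \<Longrightarrow> step (plug E0 s) (plug E0 s')"
proof (induction rule: step.induct)
  case (beta E v x t)
  then show ?case using step.beta[of "ctx_comp E0 E" v x t] by (simp add: is_ectx_ctx_comp)
next
  case (shift E F x k t)
  then show ?case using step.shift[of "ctx_comp E0 E" F x k t] by (simp add: is_ectx_ctx_comp)
next
  case (reset E v)
  then show ?case using step.reset[of "ctx_comp E0 E" v] by (simp add: is_ectx_ctx_comp)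
qed

lemma to_ln_shift_result:
  assumes "x \<notin> fv_ctx F"
  shows "to_ln (subst t (Lam x (Reset (plug F (Var x)))) k) =
    lopen 0 (LLam (LReset (lplug (to_lctx F) (BVar 0)))) (lclose 0 k (to_ln t))"
  using assms by (simp add: to_ln_subst_lopen lclose_lplug_to_lctx)

lemma lstep_to_ln: "step t t' \<Longrightarrow> lstep (to_ln t) (to_ln t')"
proof (induction rule: step.induct)
  case (beta E v x t)
  then show ?case
    using lstep_lplug[of "to_lctx E", OF _ lbeta[of "to_ln v" "lclose 0 x (to_ln t)"]]
    by (simp add: to_ln_subst_lopen)
next
  case (shift E F x k t)
  then show ?case
    using lstep_lplug[of "to_lctx E", OF _ lshift[of "to_lctx F" "lclose 0 k (to_ln t)"]]
    by (simp add: to_ln_shift_result)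
next
  case (reset E v)
  then show ?case using lstep_lplug[of "to_lctx E", OF _ lreset[of "to_ln v"]] by simp
qed

lemma to_ln_eq_FVarD: "to_ln t = FVar z \<Longrightarrow> t = Var z"
  by (cases t) auto

lemma to_ln_eq_LLamD: "to_ln t = LLam B \<Longrightarrow> \<exists>y b. t = Lam y b \<and> B = lclose 0 y (to_ln b)"
  by (cases t) auto

lemma to_ln_eq_LShiftD: "to_ln t = LShift B \<Longrightarrow> \<exists>y b. t = Shift y b \<and> B = lclose 0 y (to_ln b)"
  by (cases t) auto

lemma to_ln_eq_LAppD: "to_ln t = LApp A B \<Longrightarrow> \<exists>a b. t = App a b \<and> to_ln a = A \<and> to_ln b = B"
  by (cases t) auto

lemma to_ln_eq_LResetD: "to_ln t = LReset A \<Longrightarrow> \<exists>a. t = Reset a \<and> to_ln a = A"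
  by (cases t) auto

lemma to_ln_eq_lplugD:
  "to_ln t = lplug E d \<Longrightarrow> \<exists>Er r. t = plug Er r \<and> to_lctx Er = E \<and> to_ln r = d"
proof (induction E arbitrary: t)
  case LHole
  then show ?case by (intro exI[of _ Hole]) auto
next
  case (LCArg v E)
  then obtain a b where "t = App a b" "to_ln a = v" "to_ln b = lplug E d"
    using to_ln_eq_LAppD by fastforce
  with LCArg.IH show ?case by (metis plug.simps(2) to_lctx.simps(2))
next
  case (LCFun E c)
  then obtain a b where "t = App a b" "to_ln a = lplug E d" "to_ln b = c"
    using to_ln_eq_LAppD by fastforce
  with LCFun.IH show ?case by (metis plug.simps(3) to_lctx.simps(3))
next
  case (LCReset E)
  then obtain a where "t = Reset a" "to_ln a = lplug E d"
    using to_ln_eq_LResetD by fastforce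
  with LCReset.IH show ?case by (metis plug.simps(4) to_lctx.simps(4))
qed

lemma to_lctx_eq_lcomp_LCResetD:
  "to_lctx E = lcomp A (LCReset B) \<Longrightarrow> \<exists>A' B'. E = ctx_comp A' (CReset B') \<and> to_lctx A' = A \<and> to_lctx B' = B"
proof (induction A arbitrary: E)
  case LHole
  then show ?case by (cases E) (auto intro: exI[of _ Hole])
next
  case (LCArg v A)
  then obtain v' E' where "E = CArg v' E'" "to_ln v' = v" "to_lctx E' = lcomp A (LCReset B)"
    by (cases E) auto
  with LCArg.IH show ?case by (metis ctx_comp.simps(2) to_lctx.simps(2))
next
  case (LCFun A t)
  then obtain t' E' where "E = CFun E' t'" "to_ln t' = t" "to_lctx E' = lcomp A (LCReset B)"
    by (cases E) auto
  with LCFun.IH show ?case by (metis ctx_comp.simps(3) to_lctx.simps(3))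
next
  case (LCReset A)
  then obtain E' where "E = CReset E'" "to_lctx E' = lcomp A (LCReset B)"
    by (cases E) auto
  with LCReset.IH show ?case by (metis ctx_comp.simps(4) to_lctx.simps(4))
qed

lemma lstep_from_ln: "lstep (to_ln t) d \<Longrightarrow> \<exists>t'. step t t' \<and> to_ln t' = d"
proof (induction "to_ln t" d arbitrary: t rule: lstep.induct)
  case (lbeta v b)
  then obtain y e c where "t = App (Lam y e) c" "b = lclose 0 y (to_ln e)" "to_ln c = v"
    by (metis to_ln_eq_LAppD to_ln_eq_LLamD)
  moreover have "is_value c" using lbeta(1) calculation(3) by auto
  ultimately show ?case
    using step.beta[of Hole c y e] by (auto simp: to_ln_subst_lopen)
next
  case (lreset v)
  then obtain a where "t = Reset a" "to_ln a = v" using to_ln_eq_LResetD by metis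
  then show ?case using step.reset[of Hole a] lreset by auto
next
  case (lshift F b)
  then obtain Fr k e where t: "t = Reset (plug Fr (Shift k e))" "to_lctx Fr = F" "b = lclose 0 k (to_ln e)"
    by (metis to_ln_eq_LResetD to_ln_eq_lplugD to_ln_eq_LShiftD)
  define x where "x = fresh (fv_ctx Fr)"
  have x: "x \<notin> fv_ctx Fr" unfolding x_def by (rule fresh_notin) simp
  have "step t (Reset (subst e (Lam x (Reset (plug Fr (Var x)))) k))"
    using step.shift[of Hole Fr x k e] lshift(1) t x by auto
  then show ?case using t by (auto simp: to_ln_shift_result[OF x])
next
  case (lappL a a' c)
  then obtain p q where pq: "t = App p q" "to_ln p = a" "to_ln q = c" using to_ln_eq_LAppD by metis
  with lappL obtain p' where "step p p'" "to_ln p' = a'" by blast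
  then show ?case using pq step_plug[of p p' "CFun Hole q"] by (intro exI[of _ "App p' q"]) auto
next
  case (lappR v c c')
  then obtain p q where pq: "t = App p q" "to_ln p = v" "to_ln q = c" using to_ln_eq_LAppD by metis
  with lappR obtain q' where "step q q'" "to_ln q' = c'" by blast
  then show ?case using pq lappR step_plug[of q q' "CArg p Hole"] by (intro exI[of _ "App p q'"]) auto
next
  case (lres a a')
  then obtain p where pq: "t = Reset p" "to_ln p = a" using to_ln_eq_LResetD by metis
  with lres obtain p' where "step p p'" "to_ln p' = a'" by blast
  then show ?case using pq step_plug[of p p' "CReset Hole"] by (intro exI[of _ "Reset p'"]) auto
qed

lemma lsteps_from_ln: "lstep\<^sup>*\<^sup>* (to_ln t) d \<Longrightarrow> \<exists>t'. step\<^sup>*\<^sup>* t t' \<and> to_ln t' = d"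
proof (induction rule: rtranclp_induct)
  case (step y z)
  then obtain t' where "step\<^sup>*\<^sup>* t t'" "to_ln t' = y" by blast
  with step lstep_from_ln[of t' z] show ?case by (meson rtranclp.rtrancl_into_rtrancl)
qed blast

lemma lsteps_to_ln: "step\<^sup>*\<^sup>* t t' \<Longrightarrow> lstep\<^sup>*\<^sup>* (to_ln t) (to_ln t')"
  by (induction rule: rtranclp_induct) (auto intro: lstep_to_ln rtranclp.rtrancl_into_rtrancl)

lemma irreducible_iff_lirreducible: "irreducible t \<longleftrightarrow> lirreducible (to_ln t)"
  unfolding irreducible_def lirreducible_def using lstep_to_ln lstep_from_ln by blast

section \<open>The relation between the two sides\<close>

abbreviation lam_ctx :: "lctx \<Rightarrow> lterm" where
  "lam_ctx G \<equiv> LLam (lplug G (BVar 0))"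

inductive sim :: "lterm \<Rightarrow> lterm \<Rightarrow> bool" and sim_ctx :: "lctx \<Rightarrow> lctx \<Rightarrow> bool" where
  sim_FVar: "sim (FVar x) (FVar x)"
| sim_Lam: "(\<And>z. sim (lopen 0 (FVar z) b0) (lopen 0 (FVar z) b1)) \<Longrightarrow> sim (LLam b0) (LLam b1)"
| sim_App: "sim a a' \<Longrightarrow> sim c c' \<Longrightarrow> sim (LApp a c) (LApp a' c')"
| sim_Shift: "(\<And>z. sim (lopen 0 (FVar z) b0) (lopen 0 (FVar z) b1)) \<Longrightarrow> sim (LShift b0) (LShift b1)"
| sim_Reset: "sim a a' \<Longrightarrow> sim (LReset a) (LReset a')"
| sim_expand: "sim_ctx G G' \<Longrightarrow> sim u u' \<Longrightarrow> sim (LReset (lplug G u)) (LReset (LApp (lam_ctx G') u'))"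
| sim_Hole: "sim_ctx LHole LHole"
| sim_Arg: "sim v v' \<Longrightarrow> lvalue v \<Longrightarrow> sim_ctx G G' \<Longrightarrow> sim_ctx (LCArg v G) (LCArg v' G')"
| sim_Fun: "sim_ctx G G' \<Longrightarrow> sim t t' \<Longrightarrow> sim_ctx (LCFun G t) (LCFun G' t')"

definition sim_subst :: "(var \<Rightarrow> lterm) \<Rightarrow> (var \<Rightarrow> lterm) \<Rightarrow> bool" where
  "sim_subst s0 s1 \<longleftrightarrow> (\<forall>x. sim (s0 x) (s1 x) \<and> lvalue (s0 x))"

primrec lsubst_ctx :: "(var \<Rightarrow> lterm) \<Rightarrow> lctx \<Rightarrow> lctx" where
  "lsubst_ctx s LHole = LHole"
| "lsubst_ctx s (LCArg v E) = LCArg (lsubst s v) (lsubst_ctx s E)"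
| "lsubst_ctx s (LCFun E t) = LCFun (lsubst_ctx s E) (lsubst s t)"
| "lsubst_ctx s (LCReset E) = LCReset (lsubst_ctx s E)"

lemma lsubst_lplug [simp]: "lsubst s (lplug G u) = lplug (lsubst_ctx s G) (lsubst s u)"
  by (induction G) auto

lemma sim_lvalue: "sim v v' \<Longrightarrow> lvalue v = lvalue v'"
  by (erule sim.cases) auto

lemma sim_lc:
  shows "sim a b \<Longrightarrow> lc a \<and> lc b" and "sim_ctx G G' \<Longrightarrow> lc_ctx G \<and> lc_ctx G'"
  by (induction rule: sim_sim_ctx.inducts) (auto dest: lc_at_Suc_if_lopen)

lemma sim_lcD1: "sim a b \<Longrightarrow> lc a" and sim_lcD2: "sim a b \<Longrightarrow> lc b"
  using sim_lc by blast+

lemma sim_ctx_lcD1: "sim_ctx G G' \<Longrightarrow> lc_ctx G" and sim_ctx_lcD2: "sim_ctx G G' \<Longrightarrow> lc_ctx G'"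
  using sim_lc by blast+

lemma sim_ctx_lpure: "sim_ctx G G' \<Longrightarrow> lpure G \<and> lpure G'"
  by (induction rule: sim_sim_ctx.inducts(2)[where ?P1.0 = "\<lambda>_ _. True"]) (auto dest: sim_lvalue)

lemma sim_FVarD1: "sim (FVar x) y \<Longrightarrow> y = FVar x"
  by (erule sim.cases) auto

lemma sim_LLamD1: "sim (LLam b) y \<Longrightarrow> \<exists>b'. y = LLam b' \<and> (\<forall>z. sim (lopen 0 (FVar z) b) (lopen 0 (FVar z) b'))"
  by (erule sim.cases) auto

lemma sim_LLamD2: "sim x (LLam b') \<Longrightarrow> \<exists>b. x = LLam b \<and> (\<forall>z. sim (lopen 0 (FVar z) b) (lopen 0 (FVar z) b'))"
  by (erule sim.cases) auto

lemma sim_LShiftD1: "sim (LShift b) y \<Longrightarrow> \<exists>b'. y = LShift b' \<and> (\<forall>z. sim (lopen 0 (FVar z) b) (lopen 0 (FVar z) b'))"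
  by (erule sim.cases) auto

lemma sim_LShiftD2: "sim x (LShift b') \<Longrightarrow> \<exists>b. x = LShift b \<and> (\<forall>z. sim (lopen 0 (FVar z) b) (lopen 0 (FVar z) b'))"
  by (erule sim.cases) auto

lemma sim_LAppD1: "sim (LApp a c) y \<Longrightarrow> \<exists>a' c'. y = LApp a' c' \<and> sim a a' \<and> sim c c'"
  by (erule sim.cases) auto

lemma sim_LAppD2: "sim x (LApp a' c') \<Longrightarrow> \<exists>a c. x = LApp a c \<and> sim a a' \<and> sim c c'"
  by (erule sim.cases) auto

lemma sim_lplug: "sim_ctx G G' \<Longrightarrow> sim u u' \<Longrightarrow> sim (lplug G u) (lplug G' u')"
  by (induction rule: sim_sim_ctx.inducts(2)[where ?P1.0 = "\<lambda>_ _. True"]) (auto intro: sim_App)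

lemma sim_refl: "lc d \<Longrightarrow> sim d d"
proof (induction d rule: measure_induct_rule[of size])
  case (less d)
  have opened: "sim (lopen 0 (FVar z) b) (lopen 0 (FVar z) b)" if "lc_at 1 b" "size b < size d" for b z
    using less.IH that by (simp add: lc_at_lopen)
  show ?case
  proof (cases d)
    case (LLam b)
    then show ?thesis using less.prems opened[of b] by (auto intro!: sim_Lam)
  next
    case (LShift b)
    then show ?thesis using less.prems opened[of b] by (auto intro!: sim_Shift)
  next
    case (LApp a c)
    then show ?thesis using less by (auto intro!: sim_App)
  next
    case (LReset a)
    then show ?thesis using less by (auto intro!: sim_Reset)
  qed (use less.prems in \<open>auto intro: sim_FVar\<close>)
qed

lemma sim_ctx_refl: "lpure G \<Longrightarrow> lc_ctx G \<Longrightarrow> sim_ctx G G"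
  by (induction G) (auto intro: sim_sim_ctx.intros sim_refl)

lemma sim_subst_lc: "sim_subst s0 s1 \<Longrightarrow> lc_subst s0 \<and> lc_subst s1"
  unfolding sim_subst_def lc_subst_def using sim_lcD1 sim_lcD2 by blast

lemma sim_subst_upd: "sim_subst s0 s1 \<Longrightarrow> sim_subst (s0(w := FVar z)) (s1(w := FVar z))"
  unfolding sim_subst_def by (auto intro: sim_FVar)

lemma lvalue_lsubst: "lvalue v \<Longrightarrow> (\<forall>x. lvalue (s x)) \<Longrightarrow> lvalue (lsubst s v)"
  by (cases v) auto

lemma lopen_lsubst_fresh:
  assumes "lc_subst s" "w \<notin> lfv b"
  shows "lopen 0 (FVar z) (lsubst s b) = lsubst (s(w := FVar z)) (lopen 0 (FVar w) b)"
proof -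
  have "lc_subst (s(w := FVar z))" using assms(1) by (auto simp: lc_subst_def)
  then show ?thesis using assms(2) by (simp add: lsubst_lopen lsubst_upd_notin)
qed

lemma sim_lsubst_binder:
  assumes "\<And>s0 s1 z. sim_subst s0 s1 \<Longrightarrow> sim (lsubst s0 (lopen 0 (FVar z) b0)) (lsubst s1 (lopen 0 (FVar z) b1))"
    and "sim_subst s0 s1"
  shows "sim (lopen 0 (FVar z) (lsubst s0 b0)) (lopen 0 (FVar z) (lsubst s1 b1))"
proof -
  obtain w where w: "w \<notin> lfv b0 \<union> lfv b1" using ex_fresh[of "lfv b0 \<union> lfv b1"] by auto
  have "sim (lsubst (s0(w := FVar z)) (lopen 0 (FVar w) b0)) (lsubst (s1(w := FVar z)) (lopen 0 (FVar w) b1))"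
    using assms sim_subst_upd by blast
  then show ?thesis
    using sim_subst_lc[OF assms(2)] w lopen_lsubst_fresh[of s0 w b0 z] lopen_lsubst_fresh[of s1 w b1 z]
    by simp
qed

lemma sim_lsubst:
  shows "sim a b \<Longrightarrow> sim_subst s0 s1 \<Longrightarrow> sim (lsubst s0 a) (lsubst s1 b)"
    and "sim_ctx G G' \<Longrightarrow> sim_subst s0 s1 \<Longrightarrow> sim_ctx (lsubst_ctx s0 G) (lsubst_ctx s1 G')"
proof (induction arbitrary: s0 s1 and s0 s1 rule: sim_sim_ctx.inducts)
  case (sim_FVar x)
  then show ?case by (simp add: sim_subst_def)
next
  case (sim_Lam b0 b1)
  then show ?case by (auto intro!: sim_sim_ctx.sim_Lam sim_lsubst_binder)
next
  case (sim_Shift b0 b1)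
  then show ?case by (auto intro!: sim_sim_ctx.sim_Shift sim_lsubst_binder)
next
  case (sim_expand G G' u u')
  then show ?case using sim_sim_ctx.sim_expand[of "lsubst_ctx s0 G" "lsubst_ctx s1 G'"] by simp
next
  case (sim_Arg v v' G G')
  then show ?case by (auto intro!: sim_sim_ctx.sim_Arg lvalue_lsubst simp: sim_subst_def)
qed (auto intro: sim_sim_ctx.intros)

lemma sim_lopen:
  assumes "\<And>z. sim (lopen 0 (FVar z) b0) (lopen 0 (FVar z) b1)" "sim w0 w1" "lvalue w0"
  shows "sim (lopen 0 w0 b0) (lopen 0 w1 b1)"
proof -
  obtain w where w: "w \<notin> lfv b0 \<union> lfv b1" using ex_fresh[of "lfv b0 \<union> lfv b1"] by auto
  have ss: "sim_subst (FVar(w := w0)) (FVar(w := w1))"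
    using assms(2,3) by (auto simp: sim_subst_def intro: sim_FVar)
  have "lopen 0 w0 b0 = lsubst (FVar(w := w0)) (lopen 0 (FVar w) b0)"
    "lopen 0 w1 b1 = lsubst (FVar(w := w1)) (lopen 0 (FVar w) b1)"
    using w sim_subst_lc[OF ss] by (simp_all add: lsubst_lopen lsubst_single_notin)
  then show ?thesis using sim_lsubst(1)[OF assms(1) ss] by simp
qed

lemma sim_lclose_LLam:
  assumes "sim D0 D1"
  shows "sim (LLam (lclose 0 x D0)) (LLam (lclose 0 x D1))"
proof (rule sim_Lam)
  fix z
  have "sim_subst (FVar(x := FVar z)) (FVar(x := FVar z))"
    by (simp add: sim_subst_def sim_FVar)
  then show "sim (lopen 0 (FVar z) (lclose 0 x D0)) (lopen 0 (FVar z) (lclose 0 x D1))"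
    using sim_lsubst(1)[OF assms] sim_lcD1[OF assms] sim_lcD2[OF assms] by (simp add: lopen_lclose)
qed

section \<open>Related terms reduce alike\<close>

lemma sim_lplug_LShiftD1:
  "lpure F \<Longrightarrow> sim (lplug F (LShift b)) d1 \<Longrightarrow>
   \<exists>F' b'. d1 = lplug F' (LShift b') \<and> sim_ctx F F' \<and> (\<forall>z. sim (lopen 0 (FVar z) b) (lopen 0 (FVar z) b'))"
proof (induction F arbitrary: d1)
  case LHole
  then show ?case using sim_LShiftD1[of b d1] sim_Hole by (intro exI[of _ LHole]) auto
next
  case (LCArg v F)
  then obtain a' c' where ac: "d1 = LApp a' c'" "sim v a'" "sim (lplug F (LShift b)) c'"
    using sim_LAppD1 by fastforce
  obtain F' b' where "c' = lplug F' (LShift b')" "sim_ctx F F'"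
      "\<forall>z. sim (lopen 0 (FVar z) b) (lopen 0 (FVar z) b')"
    using LCArg.IH[of c'] ac(3) LCArg.prems(1) by auto
  with ac LCArg.prems show ?case by (intro exI[of _ "LCArg a' F'"] exI[of _ b']) (auto intro: sim_Arg)
next
  case (LCFun F t)
  then obtain a' c' where ac: "d1 = LApp a' c'" "sim (lplug F (LShift b)) a'" "sim t c'"
    using sim_LAppD1 by fastforce
  obtain F' b' where "a' = lplug F' (LShift b')" "sim_ctx F F'"
      "\<forall>z. sim (lopen 0 (FVar z) b) (lopen 0 (FVar z) b')"
    using LCFun.IH[of a'] ac(2) LCFun.prems(1) by auto
  with ac show ?case by (intro exI[of _ "LCFun F' c'"] exI[of _ b']) (auto intro: sim_Fun)
qed simp

lemma sim_lplug_LShiftD2: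
  "lpure F' \<Longrightarrow> sim d0 (lplug F' (LShift b')) \<Longrightarrow>
   \<exists>F b. d0 = lplug F (LShift b) \<and> sim_ctx F F' \<and> (\<forall>z. sim (lopen 0 (FVar z) b) (lopen 0 (FVar z) b'))"
proof (induction F' arbitrary: d0)
  case LHole
  then show ?case using sim_LShiftD2[of d0 b'] sim_Hole by (intro exI[of _ LHole]) auto
next
  case (LCArg v F')
  then obtain a c where ac: "d0 = LApp a c" "sim a v" "sim c (lplug F' (LShift b'))"
    using sim_LAppD2 by fastforce
  obtain F b where "c = lplug F (LShift b)" "sim_ctx F F'"
      "\<forall>z. sim (lopen 0 (FVar z) b) (lopen 0 (FVar z) b')"
    using LCArg.IH[of c] ac(3) LCArg.prems(1) by auto
  moreover have "lvalue a" using ac(2) LCArg.prems(1) sim_lvalue by auto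
  ultimately show ?case using ac by (intro exI[of _ "LCArg a F"] exI[of _ b]) (auto intro: sim_Arg)
next
  case (LCFun F' t)
  then obtain a c where ac: "d0 = LApp a c" "sim a (lplug F' (LShift b'))" "sim c t"
    using sim_LAppD2 by fastforce
  obtain F b where "a = lplug F (LShift b)" "sim_ctx F F'"
      "\<forall>z. sim (lopen 0 (FVar z) b) (lopen 0 (FVar z) b')"
    using LCFun.IH[of a] ac(2) LCFun.prems(1) by auto
  with ac show ?case by (intro exI[of _ "LCFun F c"] exI[of _ b]) (auto intro: sim_Fun)
qed simp

lemma sim_shift_reduct:
  assumes "lc_ctx F0" "lc_ctx F1"
    and "\<And>z. sim (LReset (lplug F0 (FVar z))) (LReset (lplug F1 (FVar z)))"
    and "\<forall>z. sim (lopen 0 (FVar z) b0) (lopen 0 (FVar z) b1)"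
  shows "sim (LReset (lopen 0 (LLam (LReset (lplug F0 (BVar 0)))) b0))
             (LReset (lopen 0 (LLam (LReset (lplug F1 (BVar 0)))) b1))"
proof -
  have "sim (lopen 0 (FVar z) (LReset (lplug F0 (BVar 0)))) (lopen 0 (FVar z) (LReset (lplug F1 (BVar 0))))"
    for z using assms(1-3) by (simp add: lopen_lplug)
  then have "sim (LLam (LReset (lplug F0 (BVar 0)))) (LLam (LReset (lplug F1 (BVar 0))))"
    by (rule sim_Lam)
  then show ?thesis
    using assms(4) sim_lopen[of b0 b1] by (simp add: sim_Reset)
qed

lemma sim_shift_reduct_congr:
  assumes "sim_ctx F F'" "\<forall>z. sim (lopen 0 (FVar z) b) (lopen 0 (FVar z) b')"
  shows "sim (LReset (lopen 0 (LLam (LReset (lplug F (BVar 0)))) b))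
             (LReset (lopen 0 (LLam (LReset (lplug F' (BVar 0)))) b'))"
proof (rule sim_shift_reduct)
  show "sim (LReset (lplug F (FVar z))) (LReset (lplug F' (FVar z)))" for z
    using assms(1) by (intro sim_Reset sim_lplug sim_FVar)
qed (use assms sim_ctx_lcD1 sim_ctx_lcD2 in auto)

text \<open>A shift under the expanded side captures the administrative redex into its continuation.\<close>
lemma sim_shift_reduct_expand:
  assumes "sim_ctx G G'" "sim_ctx F F'" "\<forall>z. sim (lopen 0 (FVar z) b) (lopen 0 (FVar z) b')"
  shows "sim (LReset (lopen 0 (LLam (LReset (lplug (lcomp G F) (BVar 0)))) b))
             (LReset (lopen 0 (LLam (LReset (lplug (LCArg (lam_ctx G') F') (BVar 0)))) b'))"
proof (rule sim_shift_reduct)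
  show "sim (LReset (lplug (lcomp G F) (FVar z))) (LReset (lplug (LCArg (lam_ctx G') F') (FVar z)))" for z
    using sim_expand[OF assms(1) sim_lplug[OF assms(2) sim_FVar]] by simp
qed (use assms sim_ctx_lcD1 sim_ctx_lcD2 lc_ctx_lcomp in auto)

definition sim_preserving :: "lctx \<Rightarrow> lctx \<Rightarrow> bool" where
  "sim_preserving E0 E1 \<longleftrightarrow> (\<forall>s s'. sim s s' \<longrightarrow> sim (lplug E0 s) (lplug E1 s'))"

lemma sim_preserving_LHole [simp]: "sim_preserving LHole LHole"
  unfolding sim_preserving_def by simp

lemma sim_preserving_LCFun: "sim_preserving E E1 \<Longrightarrow> sim t t' \<Longrightarrow> sim_preserving (LCFun E t) (LCFun E1 t')"
  unfolding sim_preserving_def by (auto intro: sim_App)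

lemma sim_preserving_LCArg: "sim_preserving E E1 \<Longrightarrow> sim v v' \<Longrightarrow> sim_preserving (LCArg v E) (LCArg v' E1)"
  unfolding sim_preserving_def by (auto intro: sim_App)

lemma sim_preserving_LCReset: "sim_preserving E E1 \<Longrightarrow> sim_preserving (LCReset E) (LCReset E1)"
  unfolding sim_preserving_def by (auto intro: sim_Reset)

lemma sim_preserving_expand:
  "sim_ctx G G' \<Longrightarrow> sim_preserving E E1 \<Longrightarrow> sim_preserving (LCReset (lcomp G E)) (LCReset (LCArg (lam_ctx G') E1))"
  unfolding sim_preserving_def by (auto intro: sim_expand)

definition catches_up :: "lterm \<Rightarrow> lterm \<Rightarrow> bool" where
  "catches_up d1 d0' \<longleftrightarrow> (\<exists>d1'. lstep\<^sup>+\<^sup>+ d1 d1' \<and> sim d0' d1')"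

lemma catches_up_step: "lstep d1 d1' \<Longrightarrow> sim d0' d1' \<Longrightarrow> catches_up d1 d0'"
  unfolding catches_up_def by blast

lemma catches_up_lplug:
  assumes "catches_up d1 d0'" "lectx E1" "sim_preserving E0 E1"
  shows "catches_up (lplug E1 d1) (lplug E0 d0')"
proof -
  obtain d1' where "lstep\<^sup>+\<^sup>+ d1 d1'" "sim d0' d1'"
    using assms(1) unfolding catches_up_def by blast
  then show ?thesis
    using lsteps_lplug[of d1 d1' E1] assms(2,3) unfolding catches_up_def sim_preserving_def by blast
qed

lemma catches_up_LAppL: "catches_up a' a0 \<Longrightarrow> sim c c' \<Longrightarrow> catches_up (LApp a' c') (LApp a0 c)"
  using catches_up_lplug[of a' a0 "LCFun LHole c'" "LCFun LHole c"] by (simp add: sim_preserving_LCFun)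

lemma catches_up_LAppR:
  "catches_up c' c0 \<Longrightarrow> sim a a' \<Longrightarrow> lvalue a' \<Longrightarrow> catches_up (LApp a' c') (LApp a c0)"
  using catches_up_lplug[of c' c0 "LCArg a' LHole" "LCArg a LHole"] by (simp add: sim_preserving_LCArg)

lemma catches_up_LReset: "catches_up a' a0 \<Longrightarrow> catches_up (LReset a') (LReset a0)"
  using catches_up_lplug[of a' a0 "LCReset LHole" "LCReset LHole"] by (simp add: sim_preserving_LCReset)

lemma catches_up_expand:
  "catches_up u' u0 \<Longrightarrow> sim_ctx G G' \<Longrightarrow> catches_up (LReset (LApp (lam_ctx G') u')) (LReset (lplug G u0))"
  using catches_up_lplug[of u' u0 "LCReset (LCArg (lam_ctx G') LHole)" "LCReset G"]
    sim_preserving_expand[of G G' LHole LHole] by simp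

lemma lplug_lpure_prefix:
  assumes "lpure G" "\<not> lvalue u" "lplug G u = lplug E r" "lectx E"
    and r: "\<not> lvalue r" "\<And>a c. r = LApp a c \<Longrightarrow> lvalue a \<and> lvalue c"
  shows "\<exists>E'. E = lcomp G E' \<and> u = lplug E' r"
  using assms(1-4)
proof (induction G arbitrary: E)
  case (LCArg v G)
  show ?case
  proof (cases E)
    case LHole
    then show ?thesis using LCArg.prems r lvalue_lplugD[of G u] by auto
  next
    case (LCArg v' E')
    then show ?thesis using LCArg.IH[of E'] LCArg.prems by auto
  next
    case (LCFun E' t)
    then show ?thesis using LCArg.prems r lvalue_lplugD[of E' r] by auto
  qed (use LCArg.prems in auto)
next
  case (LCFun G t)
  show ?case
  proof (cases E)
    case LHole
    then show ?thesis using LCFun.prems r lvalue_lplugD[of G u] by auto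
  next
    case (LCArg v' E')
    then show ?thesis using LCFun.prems lvalue_lplugD[of G u] by auto
  next
    case (LCFun E' t')
    then show ?thesis using LCFun.IH[of E'] LCFun.prems by auto
  qed (use LCFun.prems in auto)
qed auto

lemma sim_expand_forward_step:
  assumes "sim_ctx G G'" "sim u u'" "lstep (LReset (lplug G u)) d0'"
    and IH: "\<And>c0 c0' c1. size c1 < size (LReset (LApp (lam_ctx G') u')) \<Longrightarrow> sim c0 c1 \<Longrightarrow> lstep c0 c0' \<Longrightarrow>
      catches_up c1 c0'"
  shows "catches_up (LReset (LApp (lam_ctx G') u')) d0'"
proof -
  have lG': "lc_ctx G'" and pG: "lpure G" "lpure G'"
    using assms(1) sim_ctx_lcD2 sim_ctx_lpure by auto
  show ?thesis
  proof (cases "lvalue u")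
    case True
    then have "lvalue u'" using assms(2) sim_lvalue by blast
    then have "lstep (LReset (LApp (lam_ctx G') u')) (LReset (lplug G' u'))"
      using lres[OF lbeta[of u' "lplug G' (BVar 0)"]] lG' by (simp add: lopen_lplug)
    moreover have "catches_up (LReset (lplug G' u')) d0'"
      using IH[OF _ sim_Reset[OF sim_lplug[OF assms(1,2)]] assms(3)] size_lplug[of G' u'] by simp
    ultimately show ?thesis
      unfolding catches_up_def by (meson tranclp_into_tranclp2)
  next
    case False
    from assms(3) show ?thesis
    proof (cases rule: lstep_LReset_cases)
      case val
      then show ?thesis using False lvalue_lplugD by fastforce
    next
      case (shift F b)
      then obtain F2 where F2: "F = lcomp G F2" "u = lplug F2 (LShift b)"
        using lplug_lpure_prefix[OF pG(1) False] lpure_imp_lectx by fastforce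
      then obtain F2' b' where F2': "u' = lplug F2' (LShift b')" "sim_ctx F2 F2'"
          "\<forall>z. sim (lopen 0 (FVar z) b) (lopen 0 (FVar z) b')"
        using sim_lplug_LShiftD1 assms(2) shift(1) lpure_lcompD by metis
      then have "lstep (LReset (LApp (lam_ctx G') u'))
          (LReset (lopen 0 (LLam (LReset (lplug (LCArg (lam_ctx G') F2') (BVar 0)))) b'))"
        using lshift[of "LCArg (lam_ctx G') F2'" b'] sim_ctx_lpure by simp
      then show ?thesis
        using sim_shift_reduct_expand[OF assms(1) F2'(2,3)] shift F2 by (auto intro: catches_up_step)
    next
      case (inner a0)
      then obtain u0 where "lstep u u0" "d0' = LReset (lplug G u0)"
        using lstep_lpure_plugD pG False by blast
      then show ?thesis
        using IH[of u' u u0] assms(1,2) catches_up_expand by auto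
    qed
  qed
qed

lemma sim_forward_step: "sim d0 d1 \<Longrightarrow> lstep d0 d0' \<Longrightarrow> catches_up d1 d0'"
proof (induction d1 arbitrary: d0 d0' rule: measure_induct_rule[of size])
  case (less d1)
  from less.prems(1) show ?case
  proof (cases rule: sim.cases)
    case (sim_App a a' c c')
    from less.prems(2) show ?thesis
      unfolding sim_App(1)
    proof (cases rule: lstep_LApp_cases)
      case (beta b)
      then obtain b' where b': "a' = LLam b'" "\<forall>z. sim (lopen 0 (FVar z) b) (lopen 0 (FVar z) b')"
        using sim_App sim_LLamD1 by blast
      have "lvalue c'" using beta sim_App sim_lvalue by blast
      then have "lstep d1 (lopen 0 c' b')" using sim_App b' by (simp add: lbeta)
      moreover have "sim d0' (lopen 0 c' b')" using beta b' sim_App by (simp add: sim_lopen)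
      ultimately show ?thesis by (rule catches_up_step)
    next
      case (left a0)
      then show ?thesis using less.IH[of a' a a0] sim_App by (simp add: catches_up_LAppL)
    next
      case (right c0)
      then show ?thesis using less.IH[of c' c c0] sim_App sim_lvalue by (simp add: catches_up_LAppR)
    qed
  next
    case (sim_Reset a a')
    from less.prems(2) show ?thesis
      unfolding sim_Reset(1)
    proof (cases rule: lstep_LReset_cases)
      case val
      then show ?thesis using sim_Reset sim_lvalue lreset catches_up_step by blast
    next
      case (shift F b)
      then obtain F' b' where F': "a' = lplug F' (LShift b')" "sim_ctx F F'"
          "\<forall>z. sim (lopen 0 (FVar z) b) (lopen 0 (FVar z) b')"
        using sim_lplug_LShiftD1 sim_Reset by blast
      then have "lstep d1 (LReset (lopen 0 (LLam (LReset (lplug F' (BVar 0)))) b'))"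
        using sim_Reset lshift sim_ctx_lpure by simp
      then show ?thesis using shift F' sim_shift_reduct_congr catches_up_step by blast
    next
      case (inner a0)
      then show ?thesis using less.IH[of a' a a0] sim_Reset by (simp add: catches_up_LReset)
    qed
  next
    case (sim_expand G G' u u')
    then show ?thesis using sim_expand_forward_step less by blast
  qed (use less.prems(2) lvalue_no_lstep in \<open>auto elim: lstep.cases\<close>)
qed

text \<open>Unmatched steps are the administrative \<open>\<beta>\<close>-steps; the size bound on them is what lets the
  right-hand side be normalised alongside the left.\<close>
definition sim_matched :: "lterm \<Rightarrow> lterm \<Rightarrow> lterm \<Rightarrow> bool" where
  "sim_matched d0 d1 d1' \<longleftrightarrow> (\<exists>d0'. lstep d0 d0' \<and> sim d0' d1') \<or> (sim d0 d1' \<and> size d1' < size d1)"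

lemma sim_matched_LAppL: "sim_matched a a' a1 \<Longrightarrow> sim c c' \<Longrightarrow> sim_matched (LApp a c) (LApp a' c') (LApp a1 c')"
  unfolding sim_matched_def by (auto intro: lappL sim_App)

lemma sim_matched_LAppR:
  "sim_matched c c' c1 \<Longrightarrow> sim a a' \<Longrightarrow> lvalue a \<Longrightarrow> sim_matched (LApp a c) (LApp a' c') (LApp a' c1)"
  unfolding sim_matched_def by (auto intro: lappR sim_App)

lemma sim_matched_LReset: "sim_matched a a' a1 \<Longrightarrow> sim_matched (LReset a) (LReset a') (LReset a1)"
  unfolding sim_matched_def by (auto intro: lres sim_Reset)

lemma sim_matched_expand:
  assumes "sim_matched u u' u1" "sim_ctx G G'"
  shows "sim_matched (LReset (lplug G u)) (LReset (LApp (lam_ctx G') u')) (LReset (LApp (lam_ctx G') u1))"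
proof -
  have "lectx (LCReset G)" using assms(2) sim_ctx_lpure lpure_imp_lectx by auto
  then show ?thesis
    using assms lstep_lplug[of "LCReset G"] unfolding sim_matched_def by (auto intro: sim_expand)
qed

lemma LApp_lvalue_eq_lplug_LShiftD:
  "\<exists>F'. F = LCArg v F' \<and> u = lplug F' (LShift b)" if "lvalue v" "LApp v u = lplug F (LShift b)"
proof (cases F)
  case (LCFun F'' t)
  then show ?thesis using that lvalue_lplugD[of F'' "LShift b"] by auto
qed (use that in auto)

lemma sim_matched_shift:
  assumes "sim_ctx F F'" "\<forall>z. sim (lopen 0 (FVar z) b) (lopen 0 (FVar z) b')"
  shows "sim_matched (LReset (lplug F (LShift b))) d1
    (LReset (lopen 0 (LLam (LReset (lplug F' (BVar 0)))) b'))"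
  using assms lshift[of F b] sim_ctx_lpure sim_shift_reduct_congr unfolding sim_matched_def by blast

lemma sim_expand_backward_step:
  assumes "sim_ctx G G'" "sim u u'" "lstep (LReset (LApp (lam_ctx G') u')) d1'"
    and IH: "\<And>u1. lstep u' u1 \<Longrightarrow> sim_matched u u' u1"
  shows "sim_matched (LReset (lplug G u)) (LReset (LApp (lam_ctx G') u')) d1'"
proof -
  have lG': "lc_ctx G'" and pG: "lpure G" "lpure G'"
    using assms(1) sim_ctx_lcD2 sim_ctx_lpure by auto
  from assms(3) show ?thesis
  proof (cases rule: lstep_LReset_cases)
    case val
    then show ?thesis by simp
  next
    case (shift F' b')
    then obtain F2' where F2': "F' = LCArg (lam_ctx G') F2'" "u' = lplug F2' (LShift b')"
      using LApp_lvalue_eq_lplug_LShiftD[of "lam_ctx G'"] by fastforce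
    then obtain F2 b where F2: "u = lplug F2 (LShift b)" "sim_ctx F2 F2'"
        "\<forall>z. sim (lopen 0 (FVar z) b) (lopen 0 (FVar z) b')"
      using sim_lplug_LShiftD2 assms(2) shift(1) by fastforce
    have "lpure (lcomp G F2)" using pG F2 sim_ctx_lpure lpure_lcomp by blast
    then have "lstep (LReset (lplug G u)) (LReset (lopen 0 (LLam (LReset (lplug (lcomp G F2) (BVar 0)))) b))"
      using F2 lshift[of "lcomp G F2" b] by simp
    then show ?thesis
      using sim_shift_reduct_expand[OF assms(1) F2(2,3)] shift F2' unfolding sim_matched_def by auto
  next
    case (inner a1)
    from inner(1) show ?thesis
    proof (cases rule: lstep_LApp_cases)
      case beta
      then have d1': "d1' = LReset (lplug G' u')"
        using inner lG' by (auto simp: lopen_lplug)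
      then show ?thesis
        using assms(1,2) size_lplug[of G' u'] unfolding sim_matched_def by (simp add: sim_Reset sim_lplug)
    next
      case (left a2)
      then show ?thesis using lvalue_no_lstep[of "lam_ctx G'" a2] by simp
    next
      case (right u1)
      then show ?thesis using inner sim_matched_expand[OF IH assms(1)] by simp
    qed
  qed
qed

lemma sim_backward_step: "sim d0 d1 \<Longrightarrow> lstep d1 d1' \<Longrightarrow> sim_matched d0 d1 d1'"
proof (induction arbitrary: d1' rule: sim_sim_ctx.inducts(1)[where ?P2.0 = "\<lambda>_ _. True"])
  case (sim_App a a' c c')
  from sim_App.prems show ?case
  proof (cases rule: lstep_LApp_cases)
    case (beta b')
    then obtain b where b: "a = LLam b" "\<forall>z. sim (lopen 0 (FVar z) b) (lopen 0 (FVar z) b')"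
      using sim_App sim_LLamD2 by blast
    have "lvalue c" using beta sim_App sim_lvalue by blast
    then show ?thesis
      using b beta sim_App unfolding sim_matched_def
      by (intro disjI1 exI[of _ "lopen 0 c b"]) (auto intro: lbeta sim_lopen)
  next
    case (left a1)
    then show ?thesis using sim_App by (simp add: sim_matched_LAppL)
  next
    case (right c1)
    then show ?thesis using sim_App sim_lvalue by (simp add: sim_matched_LAppR)
  qed
next
  case (sim_Reset a a')
  from sim_Reset.prems show ?case
  proof (cases rule: lstep_LReset_cases)
    case val
    then show ?thesis using sim_Reset sim_lvalue lreset unfolding sim_matched_def by blast
  next
    case (shift F' b')
    then show ?thesis using sim_lplug_LShiftD2 sim_Reset sim_matched_shift by blast
  next
    case (inner a1)
    then show ?thesis using sim_Reset by (simp add: sim_matched_LReset)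
  qed
next
  case (sim_expand G G' u u')
  then show ?case using sim_expand_backward_step by blast
qed (auto elim: lstep.cases)

lemma sim_forward_steps:
  "lstep\<^sup>*\<^sup>* d0 d0' \<Longrightarrow> sim d0 d1 \<Longrightarrow> \<exists>d1'. lstep\<^sup>*\<^sup>* d1 d1' \<and> sim d0' d1'"
proof (induction rule: rtranclp_induct)
  case (step y z)
  then obtain d1' where "lstep\<^sup>*\<^sup>* d1 d1'" "sim y d1'" by blast
  with sim_forward_step[OF this(2) step(2)] show ?case
    unfolding catches_up_def by (meson rtranclp_trans tranclp_into_rtranclp)
qed blast

lemma sim_backward_steps:
  "lstep\<^sup>*\<^sup>* d1 d1' \<Longrightarrow> sim d0 d1 \<Longrightarrow> \<exists>d0'. lstep\<^sup>*\<^sup>* d0 d0' \<and> sim d0' d1'"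
proof (induction arbitrary: d0 rule: converse_rtranclp_induct)
  case (step y z)
  from sim_backward_step[OF step(4) step(1)] step(3) show ?case
    unfolding sim_matched_def by (meson converse_rtranclp_into_rtranclp)
qed blast

lemma sim_normalise_right:
  "sim d0 d1 \<Longrightarrow> lirreducible d0 \<Longrightarrow> \<exists>d1'. lstep\<^sup>*\<^sup>* d1 d1' \<and> sim d0 d1' \<and> lirreducible d1'"
proof (induction d1 rule: measure_induct_rule[of size])
  case (less d1)
  show ?case
  proof (cases "lirreducible d1")
    case False
    then obtain d1'' where st: "lstep d1 d1''" unfolding lirreducible_def by blast
    from sim_backward_step[OF less.prems(1) st] less.prems(2) have "sim d0 d1'' \<and> size d1'' < size d1"
      unfolding lirreducible_def sim_matched_def by blast
    with less.IH less.prems(2) obtain d1' where "lstep\<^sup>*\<^sup>* d1'' d1'" "sim d0 d1'" "lirreducible d1'"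
      by blast
    then show ?thesis using st by (meson converse_rtranclp_into_rtranclp)
  qed (use less.prems in blast)
qed

lemma sim_lirreducibleD2:
  assumes "sim d0 d1" "lirreducible d1"
  shows "lirreducible d0"
  unfolding lirreducible_def
proof
  assume "\<exists>d0'. lstep d0 d0'"
  then obtain d0' where "lstep d0 d0'" by blast
  then obtain d1' where "lstep\<^sup>+\<^sup>+ d1 d1'"
    using sim_forward_step[OF assms(1)] unfolding catches_up_def by blast
  then show False using assms(2) unfolding lirreducible_def by (blast dest: tranclpD)
qed

section \<open>Normal forms\<close>

definition lstuck :: "lterm \<Rightarrow> bool" where
  "lstuck d \<longleftrightarrow> (\<exists>E z v. lectx E \<and> lvalue v \<and> d = lplug E (LApp (FVar z) v))
    \<or> (\<exists>F b. lpure F \<and> d = lplug F (LShift b))"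

lemma lirreducible_LAppD1: "lirreducible (LApp a c) \<Longrightarrow> lirreducible a"
  unfolding lirreducible_def by (auto intro: lappL)

lemma lirreducible_LAppD2: "lirreducible (LApp a c) \<Longrightarrow> lvalue a \<Longrightarrow> lirreducible c"
  unfolding lirreducible_def by (auto intro: lappR)

lemma lirreducible_LResetD: "lirreducible (LReset a) \<Longrightarrow> lirreducible a \<and> \<not> lvalue a"
  unfolding lirreducible_def by (auto intro: lres lreset)

lemma lstuck_LAppL: "lstuck a \<Longrightarrow> lstuck (LApp a c)"
  unfolding lstuck_def[of a]
proof (elim disjE exE conjE)
  fix E z v assume "lectx E" "lvalue v" "a = lplug E (LApp (FVar z) v)"
  then show "lstuck (LApp a c)" unfolding lstuck_def by (intro disjI1 exI[of _ "LCFun E c"]) auto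
next
  fix F b assume "lpure F" "a = lplug F (LShift b)"
  then show "lstuck (LApp a c)" unfolding lstuck_def by (intro disjI2 exI[of _ "LCFun F c"]) auto
qed

lemma lstuck_LAppR: "lvalue a \<Longrightarrow> lstuck c \<Longrightarrow> lstuck (LApp a c)"
  unfolding lstuck_def[of c]
proof (elim disjE exE conjE)
  fix E z v assume "lvalue a" "lectx E" "lvalue v" "c = lplug E (LApp (FVar z) v)"
  then show "lstuck (LApp a c)" unfolding lstuck_def by (intro disjI1 exI[of _ "LCArg a E"]) auto
next
  fix F b assume "lvalue a" "lpure F" "c = lplug F (LShift b)"
  then show "lstuck (LApp a c)" unfolding lstuck_def by (intro disjI2 exI[of _ "LCArg a F"]) auto
qed

lemma lstuck_LReset: "lstuck a \<Longrightarrow> lirreducible (LReset a) \<Longrightarrow> lstuck (LReset a)"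
  unfolding lstuck_def[of a]
proof (elim disjE exE conjE)
  fix E z v assume "lectx E" "lvalue v" "a = lplug E (LApp (FVar z) v)"
  then show "lstuck (LReset a)" unfolding lstuck_def by (intro disjI1 exI[of _ "LCReset E"]) auto
next
  fix F b assume "lpure F" "a = lplug F (LShift b)" "lirreducible (LReset a)"
  then show "lstuck (LReset a)" unfolding lirreducible_def by (auto intro: lshift)
qed

lemma lirreducible_lstuck: "lc d \<Longrightarrow> lirreducible d \<Longrightarrow> \<not> lvalue d \<Longrightarrow> lstuck d"
proof (induction d)
  case (LShift b)
  then show ?case unfolding lstuck_def by (intro disjI2 exI[of _ LHole]) auto
next
  case (LApp a c)
  consider "\<not> lvalue a" | "lvalue a" "\<not> lvalue c" | "lvalue a" "lvalue c" by blast
  then show ?case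
  proof cases
    case 1
    then show ?thesis using LApp by (auto intro: lstuck_LAppL dest: lirreducible_LAppD1)
  next
    case 2
    then show ?thesis using LApp by (auto intro: lstuck_LAppR dest: lirreducible_LAppD2)
  next
    case 3
    then show ?thesis using LApp.prems unfolding lirreducible_def lstuck_def
      by (cases a) (auto intro: lbeta exI[of _ LHole])
  qed
next
  case (LReset a)
  then show ?case by (auto intro: lstuck_LReset dest: lirreducible_LResetD)
qed auto

text \<open>The context clause \<open>ctx_rel\<close> of the refined normal form bisimulation, for \<open>sim\<close>.\<close>
inductive sim_ctx_rel :: "lctx \<Rightarrow> lctx \<Rightarrow> bool" where
  reset: "lectx A0 \<Longrightarrow> lectx A1 \<Longrightarrow> lpure B0 \<Longrightarrow> lpure B1 \<Longrightarrow> sim_preserving A0 A1 \<Longrightarrow>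
    sim_preserving (LCReset B0) (LCReset B1) \<Longrightarrow> sim_ctx_rel (lcomp A0 (LCReset B0)) (lcomp A1 (LCReset B1))"
| pure: "lpure E0 \<Longrightarrow> lpure E1 \<Longrightarrow> sim_preserving E0 E1 \<Longrightarrow> sim_ctx_rel E0 E1"

lemma sim_ctx_rel_LCFun:
  assumes "sim_ctx_rel E E1" "sim t t'"
  shows "sim_ctx_rel (LCFun E t) (LCFun E1 t')"
  using assms(1)
proof (cases rule: sim_ctx_rel.cases)
  case (reset A0 A1 B0 B1)
  then show ?thesis
    using sim_ctx_rel.reset[of "LCFun A0 t" "LCFun A1 t'"] assms(2) by (simp add: sim_preserving_LCFun)
qed (use assms(2) in \<open>auto intro: sim_ctx_rel.pure sim_preserving_LCFun\<close>)

lemma sim_ctx_rel_LCArg: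
  assumes "sim_ctx_rel E E1" "sim v v'" "lvalue v"
  shows "sim_ctx_rel (LCArg v E) (LCArg v' E1)"
  using assms(1)
proof (cases rule: sim_ctx_rel.cases)
  case (reset A0 A1 B0 B1)
  then show ?thesis
    using sim_ctx_rel.reset[of "LCArg v A0" "LCArg v' A1"] assms(2,3) sim_lvalue
    by (simp add: sim_preserving_LCArg)
next
  case pure
  then show ?thesis
    using sim_ctx_rel.pure[of "LCArg v E" "LCArg v' E1"] assms(2,3) sim_lvalue sim_preserving_LCArg by auto
qed

lemma sim_ctx_rel_LCReset:
  assumes "sim_ctx_rel E E1"
  shows "sim_ctx_rel (LCReset E) (LCReset E1)"
  using assms
proof (cases rule: sim_ctx_rel.cases)
  case (reset A0 A1 B0 B1)
  then show ?thesis
    using sim_ctx_rel.reset[of "LCReset A0" "LCReset A1"] by (simp add: sim_preserving_LCReset)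
next
  case pure
  then show ?thesis
    using sim_ctx_rel.reset[of LHole LHole E E1] by (simp add: sim_preserving_LCReset)
qed

lemma sim_ctx_rel_expand:
  assumes "sim_ctx_rel E E1" "sim_ctx G G'"
  shows "sim_ctx_rel (LCReset (lcomp G E)) (LCReset (LCArg (lam_ctx G') E1))"
  using assms(1)
proof (cases rule: sim_ctx_rel.cases)
  case (reset A0 A1 B0 B1)
  then show ?thesis
    using sim_ctx_rel.reset[of "LCReset (lcomp G A0)" "LCReset (LCArg (lam_ctx G') A1)" B0 B1]
      assms(2) sim_ctx_lpure
    by (auto intro: sim_preserving_expand lectx_lcomp lpure_imp_lectx)
next
  case pure
  then show ?thesis
    using sim_ctx_rel.reset[of LHole LHole "lcomp G E" "LCArg (lam_ctx G') E1"] assms(2) sim_ctx_lpure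
      sim_preserving_expand[OF assms(2)]
    by (simp add: lpure_lcomp)
qed

lemma lplug_LApp_neq [simp]:
  "FVar x \<noteq> lplug E (LApp a c)" "LLam b \<noteq> lplug E (LApp a c)" "LShift b \<noteq> lplug E (LApp a c)"
  by (cases E; simp)+

lemma sim_open_stuck:
  "sim d0 d1 \<Longrightarrow> d0 = lplug E0 (LApp (FVar z) v0) \<Longrightarrow> lectx E0 \<Longrightarrow> lvalue v0 \<Longrightarrow> lirreducible d1 \<Longrightarrow>
   \<exists>E1 v1. d1 = lplug E1 (LApp (FVar z) v1) \<and> lectx E1 \<and> sim v0 v1 \<and> sim_ctx_rel E0 E1"
proof (induction arbitrary: E0 rule: sim_sim_ctx.inducts(1)[where ?P2.0 = "\<lambda>_ _. True"])
  case (sim_App a a' c c')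
  show ?case
  proof (cases E0)
    case LHole
    then show ?thesis
      using sim_App sim_FVarD1 sim_ctx_rel.pure[of LHole LHole] by (intro exI[of _ LHole]) auto
  next
    case (LCArg v E)
    have "lvalue a'" using sim_App LCArg sim_lvalue by auto
    then obtain E1 v1 where "c' = lplug E1 (LApp (FVar z) v1)" "lectx E1" "sim v0 v1" "sim_ctx_rel E E1"
      using sim_App.IH(2)[of E] sim_App.prems LCArg lirreducible_LAppD2 by auto
    then show ?thesis
      using sim_App LCArg \<open>lvalue a'\<close> by (intro exI[of _ "LCArg a' E1"] exI[of _ v1]) (auto intro: sim_ctx_rel_LCArg)
  next
    case (LCFun E t)
    then obtain E1 v1 where "a' = lplug E1 (LApp (FVar z) v1)" "lectx E1" "sim v0 v1" "sim_ctx_rel E E1"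
      using sim_App.IH(1)[of E] sim_App.prems lirreducible_LAppD1 by auto
    then show ?thesis
      using sim_App LCFun by (intro exI[of _ "LCFun E1 c'"] exI[of _ v1]) (auto intro: sim_ctx_rel_LCFun)
  qed (use sim_App.prems in auto)
next
  case (sim_Reset a a')
  then obtain E where E: "E0 = LCReset E" "a = lplug E (LApp (FVar z) v0)"
    by (cases E0) auto
  then obtain E1 v1 where "a' = lplug E1 (LApp (FVar z) v1)" "lectx E1" "sim v0 v1" "sim_ctx_rel E E1"
    using sim_Reset.IH[of E] sim_Reset.prems lirreducible_LResetD by auto
  then show ?case
    using E by (intro exI[of _ "LCReset E1"] exI[of _ v1]) (auto intro: sim_ctx_rel_LCReset)
next
  case (sim_expand G G' u u')
  then obtain E where E: "E0 = LCReset E" "lplug G u = lplug E (LApp (FVar z) v0)"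
    by (cases E0) auto
  have pG: "lpure G" using sim_expand(1) sim_ctx_lpure by blast
  have irr: "lirreducible (LApp (lam_ctx G') u')"
    using sim_expand.prems(4) lirreducible_LResetD by blast
  have "\<not> lvalue u'" using irr lbeta unfolding lirreducible_def by blast
  then have "\<not> lvalue u" using \<open>sim u u'\<close> sim_lvalue by blast
  then obtain E2 where E2: "E = lcomp G E2" "u = lplug E2 (LApp (FVar z) v0)"
    using lplug_lpure_prefix[OF pG _ E(2)] E sim_expand.prems(2,3) by auto
  moreover have "lectx E2" using E2 E sim_expand.prems(2) lectx_lcompD by auto
  ultimately obtain E1 v1 where E1: "u' = lplug E1 (LApp (FVar z) v1)" "lectx E1" "sim v0 v1" "sim_ctx_rel E2 E1"
    using sim_expand.IH[of E2] sim_expand.prems(3) lirreducible_LAppD2[OF irr] by auto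
  then show ?case
    using E E2 sim_ctx_rel_expand[OF E1(4) sim_expand(1)]
    by (intro exI[of _ "LCReset (LCArg (lam_ctx G') E1)"] exI[of _ v1]) auto
qed auto

section \<open>Back to named terms\<close>

definition sim_rel :: "trm \<Rightarrow> trm \<Rightarrow> bool" where
  "sim_rel a b \<longleftrightarrow> sim (to_ln a) (to_ln b)"

lemma val_rel_sim_rel:
  assumes s: "sim (to_ln v0) (to_ln v1)" and v: "is_value v0"
  shows "val_rel sim_rel v0 v1"
proof -
  have "sim_rel (vapp v0 x) (vapp v1 x)" for x
  proof (cases v0)
    case (Var z)
    then have "v1 = Var z" using s sim_FVarD1 to_ln_eq_FVarD by fastforce
    then show ?thesis using Var by (simp add: sim_rel_def sim_refl)
  next
    case (Lam y b)
    then obtain b' where b': "to_ln v1 = LLam b'" "\<forall>z. sim (lopen 0 (FVar z) (lclose 0 y (to_ln b))) (lopen 0 (FVar z) b')"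
      using s sim_LLamD1 by fastforce
    then obtain y' b2 where "v1 = Lam y' b2" "b' = lclose 0 y' (to_ln b2)" using to_ln_eq_LLamD by blast
    then show ?thesis using Lam b' by (simp add: sim_rel_def to_ln_subst_lopen)
  qed (use v in auto)
  moreover have "is_value v1" using sim_lvalue[OF s] v by simp
  ultimately show ?thesis using v unfolding val_rel_def by blast
qed

lemma ctx_rel_sim_rel:
  assumes "sim_ctx_rel (to_lctx E0) (to_lctx E1)"
  shows "ctx_rel sim_rel E0 E1"
  using assms
proof (cases rule: sim_ctx_rel.cases)
  case (reset A0 A1 B0 B1)
  obtain A0' B0' where 0: "E0 = ctx_comp A0' (CReset B0')" "to_lctx A0' = A0" "to_lctx B0' = B0"
    using to_lctx_eq_lcomp_LCResetD[OF reset(1)] by blast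
  obtain A1' B1' where 1: "E1 = ctx_comp A1' (CReset B1')" "to_lctx A1' = A1" "to_lctx B1' = B1"
    using to_lctx_eq_lcomp_LCResetD[OF reset(2)] by blast
  have "sim_rel (plug A0' (Var x)) (plug A1' (Var x))" "sim_rel (Reset (plug B0' (Var x))) (Reset (plug B1' (Var x)))"
    for x using reset 0 1 sim_FVar unfolding sim_preserving_def sim_rel_def by auto
  then show ?thesis
    unfolding ctx_rel_def using 0 1 reset by (intro disjI1 exI[of _ A0'] exI[of _ B0'] exI[of _ A1'] exI[of _ B1']) auto
next
  case pure
  then show ?thesis
    unfolding ctx_rel_def sim_preserving_def sim_rel_def using sim_FVar by auto
qed

lemma sim_continuation_body:
  assumes "sim_ctx F F'" "\<forall>z. sim (lopen 0 (FVar z) b) (lopen 0 (FVar z) b')"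
  shows "sim (LReset (lopen 0 (LLam (lclose 0 x (LReset (LApp (FVar k') (lplug F (FVar x)))))) b))
             (LReset (lopen 0 (LLam (lclose 0 x (LReset (LApp (FVar k') (lplug F' (FVar x)))))) b'))"
proof -
  have "sim (LReset (LApp (FVar k') (lplug F (FVar x)))) (LReset (LApp (FVar k') (lplug F' (FVar x))))"
    using assms(1) by (intro sim_Reset sim_App sim_FVar sim_lplug)
  then have "sim (LLam (lclose 0 x (LReset (LApp (FVar k') (lplug F (FVar x))))))
                 (LLam (lclose 0 x (LReset (LApp (FVar k') (lplug F' (FVar x))))))"
    by (rule sim_lclose_LLam)
  then show ?thesis using assms(2) sim_lopen[of b b'] by (simp add: sim_Reset)
qed

lemma rnf_sim_rel_open_stuck:
  assumes "sim (to_ln t0) (to_ln t1)" "irreducible t1"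
    and "lectx E" "lvalue v" "to_ln t0 = lplug E (LApp (FVar z) v)"
  shows "rnf sim_rel t0 t1"
proof -
  obtain E1 v1 where E1: "to_ln t1 = lplug E1 (LApp (FVar z) v1)" "lectx E1" "sim v v1" "sim_ctx_rel E E1"
    using sim_open_stuck[OF assms(1,5,3,4)] assms(2) irreducible_iff_lirreducible by blast
  obtain Er q where r: "t0 = plug Er (App (Var z) q)" "to_lctx Er = E" "to_ln q = v"
    using assms(5) by (metis to_ln_eq_lplugD to_ln_eq_LAppD to_ln_eq_FVarD)
  obtain Er1 q1 where r1: "t1 = plug Er1 (App (Var z) q1)" "to_lctx Er1 = E1" "to_ln q1 = v1"
    using E1(1) by (metis to_ln_eq_lplugD to_ln_eq_LAppD to_ln_eq_FVarD)
  have "ctx_rel sim_rel Er Er1" using ctx_rel_sim_rel E1(4) r(2) r1(2) by blast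
  moreover have "val_rel sim_rel q q1" using val_rel_sim_rel E1(3) r r1 assms(4) by auto
  moreover have "is_ectx Er" "is_ectx Er1" using r(2) r1(2) assms(3) E1(2) by auto
  ultimately show ?thesis
    unfolding rnf_def using r r1 by (intro disjI2 disjI1) blast
qed

lemma rnf_sim_rel_control_stuck:
  assumes "sim (to_ln t0) (to_ln t1)" "lpure F" "to_ln t0 = lplug F (LShift b)"
  shows "rnf sim_rel t0 t1"
proof -
  obtain F' b' where F': "to_ln t1 = lplug F' (LShift b')" "sim_ctx F F'"
      "\<forall>z. sim (lopen 0 (FVar z) b) (lopen 0 (FVar z) b')"
    using sim_lplug_LShiftD1 assms by metis
  obtain F0 k0 s0 where r: "t0 = plug F0 (Shift k0 s0)" "to_lctx F0 = F" "b = lclose 0 k0 (to_ln s0)"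
    using assms(3) by (metis to_ln_eq_lplugD to_ln_eq_LShiftD)
  obtain F1 k1 s1 where r1: "t1 = plug F1 (Shift k1 s1)" "to_lctx F1 = F'" "b' = lclose 0 k1 (to_ln s1)"
    using F'(1) by (metis to_ln_eq_lplugD to_ln_eq_LShiftD)
  have "is_pure F0" "is_pure F1" using sim_ctx_lpure[OF F'(2)] r(2) r1(2) by auto
  moreover have "sim_rel (Reset (subst s0 (Lam x (Reset (App (Var k') (plug F0 (Var x))))) k0))
      (Reset (subst s1 (Lam x (Reset (App (Var k') (plug F1 (Var x))))) k1))" for k' x
    unfolding sim_rel_def using sim_continuation_body[OF F'(2,3)] r r1 by (simp add: to_ln_subst_lopen)
  ultimately show ?thesis
    unfolding rnf_def using r r1 by blast
qed

lemma rnf_sim_rel: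
  assumes "sim (to_ln t0) (to_ln t1)" "irreducible t0" "irreducible t1"
  shows "rnf sim_rel t0 t1"
proof (cases "is_value t0")
  case True
  then show ?thesis unfolding rnf_def using val_rel_sim_rel[OF assms(1)] by blast
next
  case False
  then have "lstuck (to_ln t0)"
    using lirreducible_lstuck assms(2) irreducible_iff_lirreducible by simp
  then show ?thesis
    unfolding lstuck_def using rnf_sim_rel_open_stuck[OF assms(1,3)] rnf_sim_rel_control_stuck[OF assms(1)]
    by blast
qed

lemma val_rel_conversep: "val_rel R v0 v1 \<Longrightarrow> val_rel (conversep R) v1 v0"
  unfolding val_rel_def by auto

lemma ctx_rel_conversep: "ctx_rel R E0 E1 \<Longrightarrow> ctx_rel (conversep R) E1 E0"
  unfolding ctx_rel_def conversep_iff by blast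

lemma rnf_conversep:
  assumes "rnf R t0 t1"
  shows "rnf (conversep R) t1 t0"
  using assms unfolding rnf_def[of R]
proof (elim disjE exE conjE)
  assume "val_rel R t0 t1"
  then show ?thesis unfolding rnf_def using val_rel_conversep by blast
next
  fix E0 E1 z v0 v1
  assume "is_ectx E0" "is_ectx E1" "t0 = plug E0 (App (Var z) v0)" "t1 = plug E1 (App (Var z) v1)"
    "ctx_rel R E0 E1" "val_rel R v0 v1"
  then show ?thesis unfolding rnf_def
    by (intro disjI2 disjI1 exI[of _ E1] exI[of _ E0] exI[of _ z] exI[of _ v1] exI[of _ v0])
      (simp add: val_rel_conversep ctx_rel_conversep)
next
  fix F0 F1 k0 k1 s0 s1
  assume "is_pure F0" "is_pure F1" "t0 = plug F0 (Shift k0 s0)" "t1 = plug F1 (Shift k1 s1)"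
    "\<forall>k' x. k' \<noteq> x \<longrightarrow> k' \<notin> fv t0 \<union> fv t1 \<longrightarrow> x \<notin> fv t0 \<union> fv t1 \<longrightarrow>
        R (Reset (subst s0 (Lam x (Reset (App (Var k') (plug F0 (Var x))))) k0))
          (Reset (subst s1 (Lam x (Reset (App (Var k') (plug F1 (Var x))))) k1))"
  then show ?thesis unfolding rnf_def
    by (intro disjI2 exI[of _ F1] exI[of _ F0] exI[of _ k1] exI[of _ k0] exI[of _ s1] exI[of _ s0]) auto
qed

lemma refined_sim_sim_rel: "refined_sim sim_rel"
  unfolding refined_sim_def evals_def
proof (intro allI impI, elim conjE)
  fix t0 t1 t0'
  assume r: "sim_rel t0 t1" and st: "step\<^sup>*\<^sup>* t0 t0'" and irr: "irreducible t0'"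
  obtain d1 where d1: "lstep\<^sup>*\<^sup>* (to_ln t1) d1" "sim (to_ln t0') d1"
    using sim_forward_steps[OF lsteps_to_ln[OF st]] r unfolding sim_rel_def by blast
  obtain d1' where d1': "lstep\<^sup>*\<^sup>* d1 d1'" "sim (to_ln t0') d1'" "lirreducible d1'"
    using sim_normalise_right[OF d1(2)] irr irreducible_iff_lirreducible by blast
  obtain t1' where t1': "step\<^sup>*\<^sup>* t1 t1'" "to_ln t1' = d1'"
    using lsteps_from_ln d1(1) d1'(1) by (meson rtranclp_trans)
  then have "irreducible t1'" using d1' irreducible_iff_lirreducible by simp
  then show "\<exists>t1'. (step\<^sup>*\<^sup>* t1 t1' \<and> irreducible t1') \<and> rnf sim_rel t0' t1'"
    using t1' d1' irr rnf_sim_rel by blast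
qed

lemma refined_sim_conversep_sim_rel: "refined_sim (conversep sim_rel)"
  unfolding refined_sim_def evals_def
proof (intro allI impI, elim conjE)
  fix t1 t0 t1'
  assume r: "conversep sim_rel t1 t0" and st: "step\<^sup>*\<^sup>* t1 t1'" and irr: "irreducible t1'"
  obtain d0 where d0: "lstep\<^sup>*\<^sup>* (to_ln t0) d0" "sim d0 (to_ln t1')"
    using sim_backward_steps[OF lsteps_to_ln[OF st]] r unfolding sim_rel_def by auto
  obtain t0' where t0': "step\<^sup>*\<^sup>* t0 t0'" "to_ln t0' = d0"
    using lsteps_from_ln d0(1) by blast
  then have "irreducible t0'"
    using sim_lirreducibleD2[OF d0(2)] irr irreducible_iff_lirreducible by simp
  then show "\<exists>t0'. (step\<^sup>*\<^sup>* t0 t0' \<and> irreducible t0') \<and> rnf (conversep sim_rel) t1' t0'"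
    using t0' d0 irr rnf_sim_rel rnf_conversep by blast
qed

lemma refined_bisim_sim_rel: "refined_bisim sim_rel"
  unfolding refined_bisim_def using refined_sim_sim_rel refined_sim_conversep_sim_rel by blast

lemma sim_expansion:
  assumes "is_pure F" "y \<notin> fv_ctx F"
  shows "sim (to_ln (Reset (plug F u))) (to_ln (Reset (App (Lam y (plug F (Var y))) u)))"
proof -
  have "lclose 0 y (lplug (to_lctx F) (FVar y)) = lplug (to_lctx F) (BVar 0)"
    using assms(2) by (simp add: lclose_lplug_to_lctx)
  moreover have "sim_ctx (to_lctx F) (to_lctx F)"
    using assms(1) by (simp add: sim_ctx_refl)
  ultimately show ?thesis
    using sim_expand[OF _ sim_refl[OF lc_to_ln]] by simp
qed

lemma sim_rel_subst_Lam:
  assumes "sim (to_ln a0) (to_ln a1)"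
  shows "sim_rel (Reset (subst t (Lam x a0) k)) (Reset (subst t (Lam x a1) k))"
proof -
  have "sim_subst (FVar(k := to_ln (Lam x a0))) (FVar(k := to_ln (Lam x a1)))"
    using sim_lclose_LLam[OF assms] by (auto simp: sim_subst_def sim_FVar)
  then show ?thesis
    unfolding sim_rel_def using sim_lsubst(1)[OF sim_refl[OF lc_to_ln]] by (simp add: to_ln_subst sim_Reset)
qed

theorem lemma6:
  assumes "is_pure F0" and "is_pure F1"
    and "x \<notin> fv_ctx F0 \<union> fv_ctx F1" and "y \<notin> fv_ctx F1"
  shows "rnf_bisimilar
     (Reset (subst t (Lam x (Reset (plug F1 (plug F0 (Var x))))) k))
     (Reset (subst t (Lam x (Reset (App (Lam y (plug F1 (Var y))) (plug F0 (Var x))))) k))"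
proof -
  have "sim (to_ln (Reset (plug F1 (plug F0 (Var x)))))
            (to_ln (Reset (App (Lam y (plug F1 (Var y))) (plug F0 (Var x)))))"
    using assms(2,4) by (rule sim_expansion)
  then show ?thesis
    unfolding rnf_bisimilar_def using refined_bisim_sim_rel sim_rel_subst_Lam by blast
qed

end
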